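(* Let $G=(V,E)$ be a connected chordal graph, let $D\subseteq E$ be the set of edges of $G$ that lie in no $3$-cycle of $G$, let $\mathcal{H}'=(V',\mathcal{E}')$ be a Berge-acyclic subhypergraph of $\mathcal{H}(G)$ with the maximum number of hyperedges, and let $G'=(V,E(G[\mathcal{E}'])\cup D)$. Let $X(G')$ be the graph obtained from $G'$ by repeating the following step while the current graph has more than one connected component: choose two connected components $F_1,F_2$ that can be joined by a single edge $e\in E$ not in the current graph, and replace them by $F_1\cup F_2\cup\{e\}$. Then $X(G')$ is a spanning cactus subgraph of $G$ with the maximum number of edges.
   Context: All graphs are finite, simple and undirected. A graph is chordal if it has no induced cycle of length greater than $3$. A cactus is a connected graph in which every edge lies in at most one cycle; a spanning cactus subgraph of $G$ is a subgraph with vertex set $V(G)$ that is a cactus. A hypergraph is a pair $(V,\mathcal{E})$ with $V$ finite and $\mathcal{E}$ a set of nonempty subsets of $V$; a subhypergraph $(V',\mathcal{E}')$ has $V'\subseteq V$, $\mathcal{E}'\subseteq\mathcal{E}$. A Berge-cycle is a sequence $(E_1,x_1,\dots,E_n,x_n)$, $n\ge 2$, of distinct hyperedges $E_i$ and distinct vertices $x_i$ with $x_i\in E_i\cap E_{i+1}$ for all $i$ (indices mod $n$); a hypergraph is Berge-acyclic if it has no Berge-cycle. $\mathcal{H}(G)=(V,\mathcal{E})$ is the hypergraph whose hyperedges are exactly the $3$-element vertex sets inducing a triangle in $G$. For $\mathcal{E}'\subseteq\mathcal{E}$, $G[\mathcal{E}']$ is the graph whose vertices are those occurring in hyperedges of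 $\mathcal{E}'$, with $u,v$ adjacent iff $\{u,v\}\subseteq e$ for some $e\in\mathcal{E}'$. *)

theory Defs
  imports Main
begin

definition graph :: "'a set \<Rightarrow> 'a set set \<Rightarrow> bool" where
  "graph V E \<longleftrightarrow> finite V \<and> (\<forall>e\<in>E. \<exists>u v. u \<noteq> v \<and> u \<in> V \<and> v \<in> V \<and> e = {u, v})"

definition adj_rel :: "'a set set \<Rightarrow> ('a \<times> 'a) set" where
  "adj_rel E = {(u, v). {u, v} \<in> E}"

definition reachable :: "'a set set \<Rightarrow> 'a \<Rightarrow> 'a \<Rightarrow> bool" where
  "reachable E u v \<longleftrightarrow> (u, v) \<in> (adj_rel E)\<^sup>*"

definition connected_graph :: "'a set \<Rightarrow> 'a set set \<Rightarrow> bool" where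
  "connected_graph V E \<longleftrightarrow> V \<noteq> {} \<and> (\<forall>u\<in>V. \<forall>v\<in>V. reachable E u v)"

definition cycle_edges :: "'a list \<Rightarrow> 'a set set" where
  "cycle_edges xs = {{xs ! i, xs ! ((i + 1) mod length xs)} | i. i < length xs}"

definition is_cycle :: "'a set \<Rightarrow> 'a set set \<Rightarrow> 'a list \<Rightarrow> bool" where
  "is_cycle V E xs \<longleftrightarrow> length xs \<ge> 3 \<and> distinct xs \<and> set xs \<subseteq> V \<and> cycle_edges xs \<subseteq> E"

definition induced_cycle :: "'a set \<Rightarrow> 'a set set \<Rightarrow> 'a list \<Rightarrow> bool" where
  "induced_cycle V E xs \<longleftrightarrow> is_cycle V E xs \<and>
     (\<forall>u\<in>set xs. \<forall>v\<in>set xs. {u, v} \<in> E \<longrightarrow> {u, v} \<in> cycle_edges xs)"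

definition chordal :: "'a set \<Rightarrow> 'a set set \<Rightarrow> bool" where
  "chordal V E \<longleftrightarrow> \<not> (\<exists>xs. induced_cycle V E xs \<and> length xs > 3)"

text \<open>Cactus: connected, and every edge lies in at most one cycle (cycles viewed as
  subgraphs, i.e. identified with their edge sets).\<close>

definition cactus :: "'a set \<Rightarrow> 'a set set \<Rightarrow> bool" where
  "cactus V E \<longleftrightarrow> connected_graph V E \<and>
     (\<forall>e\<in>E. \<forall>xs ys. is_cycle V E xs \<and> is_cycle V E ys \<and>
        e \<in> cycle_edges xs \<and> e \<in> cycle_edges ys \<longrightarrow> cycle_edges xs = cycle_edges ys)"

definition spanning_cactus_subgraph :: "'a set \<Rightarrow> 'a set set \<Rightarrow> 'a set set \<Rightarrow> bool" where
  "spanning_cactus_subgraph V E C \<longleftrightarrow> C \<subseteq> E \<and> cactus V C"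

definition max_spanning_cactus :: "'a set \<Rightarrow> 'a set set \<Rightarrow> 'a set set \<Rightarrow> bool" where
  "max_spanning_cactus V E C \<longleftrightarrow> spanning_cactus_subgraph V E C \<and>
     (\<forall>C'. spanning_cactus_subgraph V E C' \<longrightarrow> card C' \<le> card C)"

definition hypergraph :: "'a set \<Rightarrow> 'a set set \<Rightarrow> bool" where
  "hypergraph V \<E> \<longleftrightarrow> finite V \<and> (\<forall>e\<in>\<E>. e \<noteq> {} \<and> e \<subseteq> V)"

definition subhypergraph :: "'a set \<Rightarrow> 'a set set \<Rightarrow> 'a set \<Rightarrow> 'a set set \<Rightarrow> bool" where
  "subhypergraph V' \<E>' V \<E> \<longleftrightarrow> hypergraph V' \<E>' \<and> V' \<subseteq> V \<and> \<E>' \<subseteq> \<E>"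

definition berge_cycle :: "'a set set \<Rightarrow> 'a set list \<Rightarrow> 'a list \<Rightarrow> bool" where
  "berge_cycle \<E> Es xs \<longleftrightarrow> length Es \<ge> 2 \<and> length xs = length Es \<and>
     distinct Es \<and> distinct xs \<and> set Es \<subseteq> \<E> \<and>
     (\<forall>i < length xs. xs ! i \<in> Es ! i \<inter> Es ! ((i + 1) mod length Es))"

definition berge_acyclic :: "'a set \<Rightarrow> 'a set set \<Rightarrow> bool" where
  "berge_acyclic V \<E> \<longleftrightarrow> \<not> (\<exists>Es xs. berge_cycle \<E> Es xs)"

text \<open>The triangle hypergraph H(G): hyperedges are the vertex sets of triangles.\<close>

definition triangles :: "'a set set \<Rightarrow> 'a set set" where
  "triangles E = {{a, b, c} | a b c. a \<noteq> b \<and> b \<noteq> c \<and> a \<noteq> c \<and>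
                     {a, b} \<in> E \<and> {b, c} \<in> E \<and> {a, c} \<in> E}"

definition hyp_graph_edges :: "'a set set \<Rightarrow> 'a set set" where
  "hyp_graph_edges \<E>' = {{u, v} | u v. u \<noteq> v \<and> (\<exists>e\<in>\<E>'. {u, v} \<subseteq> e)}"

definition non_triangle_edges :: "'a set set \<Rightarrow> 'a set set" where
  "non_triangle_edges E = {e \<in> E. \<not> (\<exists>t\<in>triangles E. e \<subseteq> t)}"

definition join_step :: "'a set \<Rightarrow> 'a set set \<Rightarrow> 'a set set \<Rightarrow> 'a set set \<Rightarrow> bool" where
  "join_step V E H H' \<longleftrightarrow> \<not> connected_graph V H \<and>
     (\<exists>u v. u \<in> V \<and> v \<in> V \<and> {u, v} \<in> E \<and> {u, v} \<notin> H \<and> \<not> reachable H u v \<and>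
            H' = insert {u, v} H)"

end

theory Submission
  imports Defs
begin

text \<open>
  For a spanning subgraph (V, H) let r(H) = |H| + c(H) - |V| be its cycle rank, c(H) being the
  number of components; a connected H has |V| - 1 + r(H) edges.  Adding an edge raises r by one
  if it closes a cycle and keeps r otherwise.

  If T is a Berge-acyclic family of triangles, each triangle of T joins three vertices lying in
  distinct components of the graph of the other triangles, so r(G[T]) = |T|.  In a chordal graph
  every edge of a cycle lies in a triangle; hence the edges of D, and all edges added by the
  joining process, are bridges, and the result X has r(X) = |T| for the maximum family T.  An
  edge of X on a cycle cannot be a bridge, so it lies in G[T], and counting cycle ranks again
  shows that every cycle of X is one of the triangles of T.  Thus X is a cactus with
  |V| - 1 + |T| edges.

  Conversely, build a spanning cactus C edge by edge.  An edge closing a cycle closes one whose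
  vertices are not joined by earlier cycle edges (cycles of C share no edges), and chordality
  puts a triangle on these vertices; the triangles collected this way form a Berge-acyclic family
  of size at least r(C).  So |C| \<le> |V| - 1 + |T|.
\<close>


section \<open>Reachability and paths\<close>

lemma adj_rel_converse: "(adj_rel H)\<inverse> = adj_rel H"
  by (auto simp: adj_rel_def insert_commute)

lemma reachable_refl [simp]: "reachable H x x"
  by (simp add: reachable_def)

lemma reachable_sym: "reachable H x y \<Longrightarrow> reachable H y x"
  unfolding reachable_def using rtrancl_converseI[of x y "adj_rel H"] by (simp add: adj_rel_converse)

lemma reachable_trans: "reachable H x y \<Longrightarrow> reachable H y z \<Longrightarrow> reachable H x z"
  unfolding reachable_def by auto

lemma reachable_edge: "{x, y} \<in> H \<Longrightarrow> reachable H x y"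
  unfolding reachable_def adj_rel_def by auto

lemma reachable_mono:
  assumes "reachable H x y" and "H \<subseteq> H'"
  shows "reachable H' x y"
proof -
  have "adj_rel H \<subseteq> adj_rel H'" using assms(2) by (auto simp: adj_rel_def)
  then have "(adj_rel H)\<^sup>* \<subseteq> (adj_rel H')\<^sup>*" by (rule rtrancl_mono)
  with assms(1) show ?thesis unfolding reachable_def by blast
qed

lemma reachable_empty: "reachable {} x y \<longleftrightarrow> x = y"
  unfolding reachable_def adj_rel_def by auto

lemma reachable_closed:
  assumes "\<And>x y. {x, y} \<in> F \<Longrightarrow> x \<in> S \<Longrightarrow> y \<in> S" and "reachable F x y" and "x \<in> S"
  shows "y \<in> S"
proof -
  have "(x, y) \<in> (adj_rel F)\<^sup>*" using assms(2) by (simp add: reachable_def)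
  then show ?thesis
    by (induction rule: rtrancl_induct) (use assms(1,3) in \<open>auto simp: adj_rel_def\<close>)
qed

lemma reachable_via_edges:
  assumes "\<And>p q. {p, q} \<in> F \<Longrightarrow> reachable K p q" and "reachable F x y"
  shows "reachable K x y"
proof -
  have "reachable K x z \<Longrightarrow> {z, w} \<in> F \<Longrightarrow> reachable K x w" for z w
    by (erule reachable_trans, rule assms(1))
  then have "y \<in> {z. reachable K x z}"
    using reachable_closed[of F "{z. reachable K x z}", OF _ assms(2)] by simp
  then show ?thesis by simp
qed

lemma reachable_insert:
  "reachable (insert {u, v} H) x y \<longleftrightarrow>
     reachable H x y \<or> (reachable H x u \<and> reachable H v y) \<or> (reachable H x v \<and> reachable H u y)"
  (is "?lhs \<longleftrightarrow> ?rhs")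
proof
  assume ?lhs
  then have "(x, y) \<in> (adj_rel (insert {u, v} H))\<^sup>*" by (simp add: reachable_def)
  then show ?rhs
  proof (induction rule: rtrancl_induct)
    case (step y z)
    then consider "{y, z} \<in> H" | "y = u \<and> z = v" | "y = v \<and> z = u"
      by (auto simp: adj_rel_def doubleton_eq_iff)
    then show ?case
    proof cases
      case 1
      then have "reachable H a y \<Longrightarrow> reachable H a z" for a
        using reachable_edge reachable_trans by metis
      then show ?thesis using step.IH by blast
    qed (use step.IH in auto)
  qed simp
next
  have uv: "reachable (insert {u, v} H) u v" by (simp add: reachable_edge)
  have mono: "reachable H a b \<Longrightarrow> reachable (insert {u, v} H) a b" for a b
    by (erule reachable_mono) auto
  assume ?rhs
  then show ?lhs
    by (elim disjE conjE) (use mono uv reachable_sym reachable_trans in metis)+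
qed

lemma reachable_insert_reachable:
  assumes "reachable H u v"
  shows "reachable (insert {u, v} H) x y \<longleftrightarrow> reachable H x y"
proof -
  have "reachable H x u \<Longrightarrow> reachable H v y \<Longrightarrow> reachable H x y"
    using assms reachable_trans by metis
  moreover have "reachable H x v \<Longrightarrow> reachable H u y \<Longrightarrow> reachable H x y"
    using assms reachable_trans reachable_sym by metis
  ultimately show ?thesis unfolding reachable_insert by blast
qed

fun path_edges :: "'a list \<Rightarrow> 'a set set" where
  "path_edges (x # y # ys) = insert {x, y} (path_edges (y # ys))"
| "path_edges _ = {}"

lemma path_edges_append:
  "path_edges (xs @ ys) =
     path_edges xs \<union> path_edges ys \<union> (if xs \<noteq> [] \<and> ys \<noteq> [] then {{last xs, hd ys}} else {})"
proof (induction xs rule: path_edges.induct)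
  case ("2_2" x)
  then show ?case by (cases ys) auto
qed auto

lemma path_edges_snoc: "xs \<noteq> [] \<Longrightarrow> path_edges (xs @ [y]) = insert {last xs, y} (path_edges xs)"
  by (simp add: path_edges_append)

lemma path_edges_Cons: "xs \<noteq> [] \<Longrightarrow> path_edges (x # xs) = insert {x, hd xs} (path_edges xs)"
  by (cases xs) simp_all

lemma path_edges_take: "path_edges (take n xs) \<subseteq> path_edges xs"
  by (metis Un_iff append_take_drop_id path_edges_append subsetI)

lemma path_edges_drop: "path_edges (drop n xs) \<subseteq> path_edges xs"
  by (metis Un_iff append_take_drop_id path_edges_append subsetI)

lemma path_edges_take_drop:
  assumes "j < length xs"
  shows "path_edges xs = path_edges (take (Suc j) xs) \<union> path_edges (drop j xs)"
proof -
  have split: "xs = take j xs @ xs ! j # drop (Suc j) xs"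
    using assms by (simp add: Cons_nth_drop_Suc)
  have take: "take (Suc j) xs = take j xs @ [xs ! j]"
    using assms by (simp add: take_Suc_conv_app_nth)
  have drop: "drop j xs = xs ! j # drop (Suc j) xs"
    using assms by (simp add: Cons_nth_drop_Suc)
  show ?thesis
    by (subst split, unfold take drop path_edges_append) (auto simp: path_edges_Cons)
qed

lemma path_edge_subset_set: "f \<in> path_edges xs \<Longrightarrow> f \<subseteq> set xs"
  by (induction xs rule: path_edges.induct) auto

lemma path_edges_conv_nth: "path_edges xs = {{xs ! i, xs ! Suc i} | i. Suc i < length xs}"
proof (induction xs rule: path_edges.induct)
  case (1 x y ys)
  have "{{(x # y # ys) ! i, (x # y # ys) ! Suc i} | i. Suc i < length (x # y # ys)} =
        insert {x, y} {{(y # ys) ! i, (y # ys) ! Suc i} | i. Suc i < length (y # ys)}"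
    (is "?L = ?R")
  proof
    show "?L \<subseteq> ?R"
    proof
      fix f assume "f \<in> ?L"
      then obtain i where "f = {(x # y # ys) ! i, (x # y # ys) ! Suc i}" "Suc i < length (x # y # ys)"
        by blast
      then show "f \<in> ?R" by (cases i) auto
    qed
  next
    have "{x, y} \<in> ?L" by (rule CollectI, rule exI[of _ 0]) auto
    moreover have "{(y # ys) ! k, (y # ys) ! Suc k} \<in> ?L" if "Suc k < length (y # ys)" for k
      using that by (intro CollectI exI[of _ "Suc k"]) auto
    ultimately show "?R \<subseteq> ?L" by blast
  qed
  with 1 show ?case by simp
qed simp_all

lemma reachable_along_path:
  assumes "path_edges xs \<subseteq> K" and "x \<in> set xs" and "y \<in> set xs"
  shows "reachable K x y"
proof -
  have hd: "reachable K (hd xs) z" if "path_edges xs \<subseteq> K" "z \<in> set xs" for z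
    using that
  proof (induction xs rule: path_edges.induct)
    case (1 a b ys)
    then show ?case
      using reachable_trans[OF reachable_edge[of a b K]] by (cases "z = a") auto
  qed auto
  show ?thesis using hd[OF assms(1,2)] hd[OF assms(1,3)] reachable_sym reachable_trans by metis
qed

lemma reachable_simple_path:
  assumes "reachable K x y"
  obtains ps where "ps \<noteq> []" "distinct ps" "hd ps = x" "last ps = y" "path_edges ps \<subseteq> K"
proof -
  have "(x, y) \<in> (adj_rel K)\<^sup>*" using assms by (simp add: reachable_def)
  then have "\<exists>ps. ps \<noteq> [] \<and> distinct ps \<and> hd ps = x \<and> last ps = y \<and> path_edges ps \<subseteq> K"
  proof (induction rule: rtrancl_induct)
    case base
    show ?case by (rule exI[of _ "[x]"]) simp
  next
    case (step z y)
    then obtain ps where ps: "ps \<noteq> []" "distinct ps" "hd ps = x" "last ps = z" "path_edges ps \<subseteq> K"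
      by blast
    show ?case
    proof (cases "y \<in> set ps")
      case True
      then obtain as bs where ps_eq: "ps = as @ y # bs" by (metis split_list)
      have "path_edges (as @ [y]) \<subseteq> path_edges ps"
        by (simp add: ps_eq path_edges_append) blast
      moreover have "hd (as @ [y]) = x" using ps_eq ps(3) by (cases as) auto
      ultimately show ?thesis using ps ps_eq by (intro exI[of _ "as @ [y]"]) auto
    next
      case False
      have "{z, y} \<in> K" using step(2) by (simp add: adj_rel_def)
      then show ?thesis using ps False by (intro exI[of _ "ps @ [y]"]) (auto simp: path_edges_snoc)
    qed
  qed
  then show ?thesis using that by blast
qed

section \<open>Cycles\<close>

lemma cycle_edges_conv_path_edges:
  assumes "xs \<noteq> []"
  shows "cycle_edges xs = insert {last xs, hd xs} (path_edges xs)"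
proof -
  let ?n = "length xs"
  have "{xs ! i, xs ! ((i + 1) mod ?n)} \<in> insert {last xs, hd xs} (path_edges xs)" if "i < ?n" for i
  proof (cases "Suc i < ?n")
    case True
    then show ?thesis by (auto simp: path_edges_conv_nth)
  next
    case False
    with that have "i = ?n - 1" by simp
    with assms show ?thesis by (simp add: last_conv_nth hd_conv_nth insert_commute)
  qed
  moreover have "{last xs, hd xs} \<in> cycle_edges xs"
    unfolding cycle_edges_def using assms
    by (intro CollectI exI[of _ "?n - 1"]) (simp add: last_conv_nth hd_conv_nth)
  moreover have "{xs ! i, xs ! Suc i} \<in> cycle_edges xs" if "Suc i < ?n" for i
    unfolding cycle_edges_def using that by (intro CollectI exI[of _ i]) simp
  ultimately show ?thesis by (auto simp: cycle_edges_def path_edges_conv_nth)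
qed

lemma cycle_edges_rotate1: "cycle_edges (rotate1 xs) = cycle_edges xs"
proof (cases xs)
  case (Cons x ys)
  show ?thesis
  proof (cases "ys = []")
    case False
    then have "cycle_edges (ys @ [x]) = insert {x, hd ys} (insert {last ys, x} (path_edges ys))"
      by (simp add: cycle_edges_conv_path_edges path_edges_snoc)
    moreover have "cycle_edges (x # ys) = insert {last ys, x} (insert {x, hd ys} (path_edges ys))"
      using False by (simp add: cycle_edges_conv_path_edges path_edges_Cons)
    ultimately show ?thesis using Cons by (auto simp: insert_commute)
  qed (use Cons in simp)
qed simp

lemma cycle_edges_rotate: "cycle_edges (rotate k xs) = cycle_edges xs"
  by (induction k) (simp_all add: cycle_edges_rotate1)

lemma is_cycle_rotate: "is_cycle V E (rotate k xs) \<longleftrightarrow> is_cycle V E xs"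
  by (simp add: is_cycle_def cycle_edges_rotate)

lemma is_cycle_mono: "is_cycle V H xs \<Longrightarrow> H \<subseteq> H' \<Longrightarrow> is_cycle V H' xs"
  unfolding is_cycle_def by blast

lemma cycle_edgeE:
  assumes "f \<in> cycle_edges xs"
  obtains i where "i < length xs" "f = {xs ! i, xs ! ((i + 1) mod length xs)}"
  using assms unfolding cycle_edges_def by blast

lemma is_cycle_edgeE:
  assumes "is_cycle V H zs" and "f \<in> cycle_edges zs"
  obtains x y where "x \<noteq> y" "f = {x, y}"
proof -
  let ?n = "length zs"
  obtain i where i: "i < ?n" "f = {zs ! i, zs ! ((i + 1) mod ?n)}"
    using assms(2) by (rule cycle_edgeE)
  have n3: "?n \<ge> 3" and dist: "distinct zs" using assms(1) by (auto simp: is_cycle_def)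
  have j: "(i + 1) mod ?n < ?n" using i(1) by (intro mod_less_divisor) auto
  have "(i + 1) mod ?n \<noteq> i"
  proof (cases "i + 1 < ?n")
    case False
    with i(1) have "i + 1 = ?n" by simp
    with n3 show ?thesis by simp
  qed simp
  then have "zs ! i \<noteq> zs ! ((i + 1) mod ?n)" using nth_eq_iff_index_eq[OF dist i(1) j] by simp
  then show ?thesis using that i(2) by blast
qed

lemma cycle_edge_subset_set:
  assumes "f \<in> cycle_edges xs"
  shows "f \<subseteq> set xs"
proof -
  obtain i where "i < length xs" "f = {xs ! i, xs ! ((i + 1) mod length xs)}"
    using assms by (rule cycle_edgeE)
  moreover from this(1) have "(i + 1) mod length xs < length xs" by (intro mod_less_divisor) auto
  ultimately show ?thesis by simp
qed

lemma cycle_edge_is_closing_edge: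
  assumes "f \<in> cycle_edges xs"
  obtains k where "f = {last (rotate k xs), hd (rotate k xs)}"
proof -
  have ne: "xs \<noteq> []" using assms by (auto simp: cycle_edges_def)
  show ?thesis
  proof (cases "f \<in> path_edges xs")
    case True
    then obtain i where i: "f = {xs ! i, xs ! Suc i}" "Suc i < length xs"
      by (auto simp: path_edges_conv_nth)
    have "rotate (Suc i) xs = drop (Suc i) xs @ take (Suc i) xs"
      using i(2) by (simp add: rotate_drop_take)
    then have "last (rotate (Suc i) xs) = xs ! i" "hd (rotate (Suc i) xs) = xs ! Suc i"
      using i(2) by (simp_all add: hd_drop_conv_nth take_Suc_conv_app_nth)
    then show ?thesis using that i(1) by (metis insert_commute)
  next
    case False
    then show ?thesis using that[of 0] assms cycle_edges_conv_path_edges[OF ne] by simp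
  qed
qed

lemma closing_edge_notin_path_edges:
  assumes "distinct xs" and "length xs \<ge> 3"
  shows "{last xs, hd xs} \<notin> path_edges xs"
proof
  let ?n = "length xs"
  assume closing: "{last xs, hd xs} \<in> path_edges xs"
  have "xs \<noteq> []" using assms(2) by auto
  then have "last xs = xs ! (?n - 1)" "hd xs = xs ! 0" by (simp_all add: last_conv_nth hd_conv_nth)
  with closing obtain j where j: "{xs ! (?n - 1), xs ! 0} = {xs ! j, xs ! Suc j}" "Suc j < ?n"
    by (auto simp: path_edges_conv_nth)
  have eq: "xs ! a = xs ! b \<longleftrightarrow> a = b" if "a < ?n" "b < ?n" for a b
    using nth_eq_iff_index_eq[OF assms(1) that] .
  have "xs ! (?n - 1) = xs ! j \<and> xs ! 0 = xs ! Suc j \<or> xs ! (?n - 1) = xs ! Suc j \<and> xs ! 0 = xs ! j"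
    using j(1) by (simp add: doubleton_eq_iff)
  then have "?n - 1 = j \<and> 0 = Suc j \<or> ?n - 1 = Suc j \<and> 0 = j"
    using eq[of "?n - 1" j] eq[of 0 "Suc j"] eq[of "?n - 1" "Suc j"] eq[of 0 j] j(2) by linarith
  with assms(2) show False by linarith
qed

lemma reachable_on_cycle:
  assumes "is_cycle V H xs" and "x \<in> set xs" and "y \<in> set xs"
  shows "reachable (cycle_edges xs) x y"
proof -
  have "xs \<noteq> []" using assms(2) by auto
  then show ?thesis
    using reachable_along_path[OF _ assms(2,3)] cycle_edges_conv_path_edges by blast
qed

lemma reachable_around_cycle_edge:
  assumes "is_cycle V H xs" and "{p, q} \<in> cycle_edges xs"
  shows "reachable (cycle_edges xs - {{p, q}}) p q"
proof -
  obtain k where k: "{p, q} = {last (rotate k xs), hd (rotate k xs)}"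
    using cycle_edge_is_closing_edge[OF assms(2)] .
  let ?ys = "rotate k xs"
  have ys: "distinct ?ys" "length ?ys \<ge> 3" "?ys \<noteq> []" using assms(1) by (auto simp: is_cycle_def)
  have "cycle_edges xs = insert {p, q} (path_edges ?ys)"
    using cycle_edges_conv_path_edges[OF ys(3)] k by (simp add: cycle_edges_rotate)
  moreover have "{p, q} \<notin> path_edges ?ys"
    using closing_edge_notin_path_edges[OF ys(1,2)] k by simp
  ultimately have "path_edges ?ys \<subseteq> cycle_edges xs - {{p, q}}" by auto
  then have r: "reachable (cycle_edges xs - {{p, q}}) (last ?ys) (hd ?ys)"
    by (rule reachable_along_path[OF _ last_in_set[OF ys(3)] hd_in_set[OF ys(3)]])
  from k consider "p = last ?ys" "q = hd ?ys" | "p = hd ?ys" "q = last ?ys"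
    by (auto simp: doubleton_eq_iff)
  then show ?thesis using r reachable_sym[OF r] by cases simp_all
qed

lemma cycle_degree_le_2:
  assumes "is_cycle V H xs" and "f1 \<in> cycle_edges xs" "f2 \<in> cycle_edges xs" "f3 \<in> cycle_edges xs"
    and "x \<in> f1" "x \<in> f2" "x \<in> f3"
  shows "f1 = f2 \<or> f1 = f3 \<or> f2 = f3"
proof -
  let ?n = "length xs"
  have dist: "distinct xs" using assms(1) by (simp add: is_cycle_def)
  have "x \<in> set xs" using assms(2,5) cycle_edge_subset_set by blast
  then obtain i where i: "i < ?n" "x = xs ! i" by (auto simp: in_set_conv_nth)
  have neighbours: "f = {xs ! i, xs ! ((i + 1) mod ?n)} \<or> f = {xs ! ((i + ?n - 1) mod ?n), xs ! i}"
    if f: "f \<in> cycle_edges xs" "x \<in> f" for f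
  proof -
    obtain k where k: "k < ?n" "f = {xs ! k, xs ! ((k + 1) mod ?n)}"
      using f(1) by (rule cycle_edgeE)
    have k1: "(k + 1) mod ?n < ?n" using k(1) by (intro mod_less_divisor) auto
    have eq: "xs ! a = xs ! i \<longleftrightarrow> a = i" if "a < ?n" for a
      using nth_eq_iff_index_eq[OF dist that i(1)] .
    from f(2) k(2) i(2) have "k = i \<or> (k + 1) mod ?n = i"
      using eq[OF k(1)] eq[OF k1] by auto
    moreover have "(k + 1) mod ?n = i \<Longrightarrow> k = (i + ?n - 1) mod ?n"
      using k(1) by (cases "k + 1 = ?n") auto
    ultimately show ?thesis using k(2) by (auto simp: insert_commute)
  qed
  show ?thesis
    using neighbours[OF assms(2,5)] neighbours[OF assms(3,6)] neighbours[OF assms(4,7)] by metis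
qed

lemma cycle_through_triangle:
  assumes "is_cycle V H zs" and "a \<noteq> b" "b \<noteq> c" "a \<noteq> c"
    and "{a, b} \<in> cycle_edges zs" "{b, c} \<in> cycle_edges zs" "{a, c} \<in> cycle_edges zs"
  shows "cycle_edges zs = {{a, b}, {b, c}, {a, c}}"
proof -
  let ?K = "cycle_edges zs" and ?S = "{a, b, c}"
  have neq: "{a, b} \<noteq> {a, c}" "{a, b} \<noteq> {b, c}" "{a, c} \<noteq> {b, c}"
    using assms(2-4) by (auto simp: doubleton_eq_iff)
  have at_a: "f = {a, b} \<or> f = {a, c}" if "f \<in> ?K" "a \<in> f" for f
    using cycle_degree_le_2[OF assms(1,5,7) that(1)] that(2) neq by auto
  have at_b: "f = {a, b} \<or> f = {b, c}" if "f \<in> ?K" "b \<in> f" for f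
    using cycle_degree_le_2[OF assms(1,5,6) that(1)] that(2) neq by auto
  have at_c: "f = {a, c} \<or> f = {b, c}" if "f \<in> ?K" "c \<in> f" for f
    using cycle_degree_le_2[OF assms(1,7,6) that(1)] that(2) neq by auto
  have closed: "y \<in> ?S" if "{x, y} \<in> ?K" "x \<in> ?S" for x y
    using that at_a[of "{x, y}"] at_b[of "{x, y}"] at_c[of "{x, y}"] by (auto simp: doubleton_eq_iff)
  have "a \<in> set zs" using cycle_edge_subset_set[OF assms(5)] by simp
  then have in_S: "w \<in> ?S" if "w \<in> set zs" for w
    using reachable_closed[OF closed reachable_on_cycle[OF assms(1) _ that]] by simp
  have "f \<in> {{a, b}, {b, c}, {a, c}}" if f: "f \<in> ?K" for f
  proof -
    obtain x y where "x \<noteq> y" "f = {x, y}" using is_cycle_edgeE[OF assms(1) f] .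
    moreover have "x \<in> ?S" "y \<in> ?S" using in_S cycle_edge_subset_set[OF f] calculation(2) by auto
    ultimately show ?thesis by (auto simp: insert_commute)
  qed
  with assms(5-7) show ?thesis by blast
qed

lemma graph_edgeE:
  assumes "graph V E" and "f \<in> E"
  obtains a b where "a \<noteq> b" "a \<in> V" "b \<in> V" "f = {a, b}"
  using assms unfolding graph_def by blast

lemma graph_edge_vertices:
  assumes "graph V E" and "{a, b} \<in> E"
  shows "a \<noteq> b" "a \<in> V" "b \<in> V"
proof -
  obtain a' b' where "a' \<noteq> b'" "a' \<in> V" "b' \<in> V" "{a, b} = {a', b'}"
    using graph_edgeE[OF assms] .
  then show "a \<noteq> b" "a \<in> V" "b \<in> V" by (auto simp: doubleton_eq_iff)
qed

lemma graph_subset: "graph V E \<Longrightarrow> F \<subseteq> E \<Longrightarrow> graph V F"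
  unfolding graph_def by (meson subsetD)

lemma finite_graph_edges:
  assumes "graph V E"
  shows "finite E"
proof -
  have "E \<subseteq> Pow V"
  proof
    fix e assume "e \<in> E"
    with assms show "e \<in> Pow V" by (elim graph_edgeE) auto
  qed
  moreover have "finite V" using assms by (simp add: graph_def)
  ultimately show ?thesis by (rule finite_subset[OF _ finite_Pow_iff[THEN iffD2]])
qed

lemma reachable_in_vertices:
  assumes "graph V H" and "reachable H x y" and "x \<in> V"
  shows "y \<in> V"
  by (rule reachable_closed[OF _ assms(2,3)]) (rule graph_edge_vertices(3)[OF assms(1)])

lemma cycle_closing_path:
  assumes "graph V K" and "u \<in> V" and "reachable K u v" and "{u, v} \<notin> K" and "u \<noteq> v"
  obtains ps where "is_cycle V (insert {u, v} K) ps" "path_edges ps \<subseteq> K"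
    "cycle_edges ps = insert {u, v} (path_edges ps)"
proof -
  obtain ps where ps: "ps \<noteq> []" "distinct ps" "hd ps = u" "last ps = v" "path_edges ps \<subseteq> K"
    using reachable_simple_path[OF assms(3)] by blast
  have "length ps \<noteq> 1" using ps assms(5) by (cases ps) auto
  moreover have "length ps \<noteq> 2"
  proof
    assume "length ps = 2"
    then obtain a b where "ps = [a, b]" by (auto simp: length_Suc_conv numeral_2_eq_2)
    then show False using ps assms(4) by simp
  qed
  moreover have "length ps \<noteq> 0" using ps(1) by simp
  ultimately have "length ps \<ge> 3" by linarith
  moreover have "x \<in> V" if "x \<in> set ps" for x
    using reachable_in_vertices[OF assms(1) reachable_along_path[OF ps(5) hd_in_set[OF ps(1)] that]]
      ps(3) assms(2) by simp
  moreover have closing: "cycle_edges ps = insert {u, v} (path_edges ps)"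
    using cycle_edges_conv_path_edges[OF ps(1)] ps(3,4) by (simp add: insert_commute)
  ultimately have "is_cycle V (insert {u, v} K) ps"
    using ps(2,5) unfolding is_cycle_def by blast
  then show ?thesis using ps(5) closing by (rule that)
qed

definition cyclic_edges :: "'a set \<Rightarrow> 'a set set \<Rightarrow> 'a set set" where
  "cyclic_edges V H = {f \<in> H. \<exists>xs. is_cycle V H xs \<and> f \<in> cycle_edges xs}"

lemma cyclic_edges_mono: "H \<subseteq> H' \<Longrightarrow> cyclic_edges V H \<subseteq> cyclic_edges V H'"
  unfolding cyclic_edges_def using is_cycle_mono by blast

lemma reachable_cyclic_edges_mono:
  "reachable (cyclic_edges V H) x y \<Longrightarrow> H \<subseteq> H' \<Longrightarrow> reachable (cyclic_edges V H') x y"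
  by (erule reachable_mono) (rule cyclic_edges_mono)

lemma cyclic_edges_subset: "cyclic_edges V H \<subseteq> H"
  unfolding cyclic_edges_def by blast

lemma cyclic_edge_iff_reachable:
  assumes "graph V H" and "{p, q} \<in> H"
  shows "{p, q} \<in> cyclic_edges V H \<longleftrightarrow> reachable (H - {{p, q}}) p q"
proof
  assume "{p, q} \<in> cyclic_edges V H"
  then obtain xs where "is_cycle V H xs" "{p, q} \<in> cycle_edges xs"
    unfolding cyclic_edges_def by blast
  moreover from this(1) have "cycle_edges xs - {{p, q}} \<subseteq> H - {{p, q}}"
    by (auto simp: is_cycle_def)
  ultimately show "reachable (H - {{p, q}}) p q"
    by (rule reachable_mono[OF reachable_around_cycle_edge])
next
  assume r: "reachable (H - {{p, q}}) p q"
  have "graph V (H - {{p, q}})" using assms(1) by (rule graph_subset) blast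
  moreover have "p \<in> V" "p \<noteq> q" using graph_edge_vertices[OF assms] by simp_all
  ultimately obtain xs where "is_cycle V (insert {p, q} (H - {{p, q}})) xs"
    "cycle_edges xs = insert {p, q} (path_edges xs)"
    using cycle_closing_path[OF _ _ r] by blast
  moreover have "insert {p, q} (H - {{p, q}}) = H" using assms(2) by blast
  ultimately show "{p, q} \<in> cyclic_edges V H" using assms(2) unfolding cyclic_edges_def by auto
qed

section \<open>Cycle rank\<close>

definition component :: "'a set \<Rightarrow> 'a set set \<Rightarrow> 'a \<Rightarrow> 'a set" where
  "component V H x = {y \<in> V. reachable H x y}"

definition components :: "'a set \<Rightarrow> 'a set set \<Rightarrow> 'a set set" where
  "components V H = component V H ` V"

definition cycle_rank :: "'a set \<Rightarrow> 'a set set \<Rightarrow> int" where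
  "cycle_rank V H = int (card H) + int (card (components V H)) - int (card V)"

lemma component_eq:
  assumes "reachable H x y"
  shows "component V H x = component V H y"
proof -
  have "reachable H x z \<longleftrightarrow> reachable H y z" for z
    using assms reachable_sym reachable_trans by metis
  then show ?thesis by (simp add: component_def)
qed

lemma component_eq_iff:
  assumes "y \<in> V"
  shows "component V H x = component V H y \<longleftrightarrow> reachable H x y"
proof
  assume "component V H x = component V H y"
  moreover have "y \<in> component V H y" using assms by (simp add: component_def)
  ultimately have "y \<in> component V H x" by simp
  then show "reachable H x y" by (simp add: component_def)
qed (rule component_eq)

lemma component_insert:
  "component V (insert {u, v} H) x =
     (if reachable H x u \<or> reachable H x v then component V H u \<union> component V H v
      else component V H x)"
proof -
  have "reachable (insert {u, v} H) x y \<longleftrightarrow> reachable H u y \<or> reachable H v y"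
    if "reachable H x u" for y
    using that unfolding reachable_insert by (metis reachable_sym reachable_trans)
  moreover have "reachable (insert {u, v} H) x y \<longleftrightarrow> reachable H u y \<or> reachable H v y"
    if "reachable H x v" for y
    using that unfolding reachable_insert by (metis reachable_sym reachable_trans)
  moreover have "reachable (insert {u, v} H) x y \<longleftrightarrow> reachable H x y"
    if "\<not> reachable H x u" "\<not> reachable H x v" for y
    using that unfolding reachable_insert by blast
  ultimately show ?thesis unfolding component_def by auto
qed

lemma components_insert_unreachable:
  assumes "u \<in> V" and "v \<in> V" and "\<not> reachable H u v"
  shows "components V (insert {u, v} H) =
           insert (component V H u \<union> component V H v)
             (components V H - {component V H u, component V H v})"
    (is "_ = insert ?uv (?C - {?u, ?v})")
proof
  show "components V (insert {u, v} H) \<subseteq> insert ?uv (?C - {?u, ?v})"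
  proof
    fix K assume "K \<in> components V (insert {u, v} H)"
    then obtain x where "x \<in> V" "K = component V (insert {u, v} H) x"
      by (auto simp: components_def)
    then show "K \<in> insert ?uv (?C - {?u, ?v})"
      using component_eq_iff[OF assms(1), of H x] component_eq_iff[OF assms(2), of H x]
      by (auto simp: component_insert components_def)
  qed
next
  show "insert ?uv (?C - {?u, ?v}) \<subseteq> components V (insert {u, v} H)"
  proof
    fix K assume K: "K \<in> insert ?uv (?C - {?u, ?v})"
    show "K \<in> components V (insert {u, v} H)"
    proof (cases "K = ?uv")
      case True
      then have "K = component V (insert {u, v} H) u" by (simp add: component_insert)
      then show ?thesis using assms(1) by (simp add: components_def)
    next
      case False
      with K obtain x where x: "x \<in> V" "K = component V H x" "K \<noteq> ?u" "K \<noteq> ?v"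
        by (auto simp: components_def)
      then have "K = component V (insert {u, v} H) x"
        using component_eq[of H x u V] component_eq[of H x v V] by (auto simp: component_insert)
      then show ?thesis using x(1) by (simp add: components_def)
    qed
  qed
qed

lemma card_components_insert_unreachable:
  assumes "finite V" and "u \<in> V" and "v \<in> V" and "\<not> reachable H u v"
  shows "card (components V (insert {u, v} H)) + 1 = card (components V H)"
proof -
  let ?C = "components V H" and ?u = "component V H u" and ?v = "component V H v"
  have fin: "finite ?C" using assms(1) by (simp add: components_def)
  have uv: "{?u, ?v} \<subseteq> ?C" using assms(2,3) by (simp add: components_def)
  have "?u \<noteq> ?v" using assms(4) component_eq_iff[OF assms(3), of H u] by simp
  then have card_uv: "card {?u, ?v} = 2" by simp
  have "?u \<union> ?v \<notin> ?C"
  proof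
    assume "?u \<union> ?v \<in> ?C"
    then obtain w where w: "?u \<union> ?v = component V H w" by (auto simp: components_def)
    have "u \<in> ?u" "v \<in> ?v" using assms(2,3) by (simp_all add: component_def)
    then have "u \<in> component V H w" "v \<in> component V H w" unfolding w[symmetric] by simp_all
    then have "reachable H w u" "reachable H w v" by (simp_all add: component_def)
    then show False using reachable_trans[OF reachable_sym] assms(4) by metis
  qed
  then have "card (components V (insert {u, v} H)) = Suc (card (?C - {?u, ?v}))"
    using components_insert_unreachable[OF assms(2-4)] fin by simp
  moreover have "card (?C - {?u, ?v}) + 2 = card ?C"
    using card_Diff_subset[OF _ uv] card_mono[OF fin uv] card_uv by simp
  ultimately show ?thesis by simp
qed

lemma cycle_rank_insert_reachable:
  assumes "finite H" and "reachable H u v" and "{u, v} \<notin> H"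
  shows "cycle_rank V (insert {u, v} H) = cycle_rank V H + 1"
proof -
  have "components V (insert {u, v} H) = components V H"
    unfolding components_def component_def reachable_insert_reachable[OF assms(2)] ..
  with assms(1,3) show ?thesis by (simp add: cycle_rank_def)
qed

lemma cycle_rank_insert_unreachable:
  assumes "finite V" and "finite H" and "u \<in> V" and "v \<in> V" and "\<not> reachable H u v"
  shows "cycle_rank V (insert {u, v} H) = cycle_rank V H"
proof -
  have "{u, v} \<notin> H" using assms(5) reachable_edge by metis
  with assms show ?thesis
    using card_components_insert_unreachable[OF assms(1,3-5)] by (simp add: cycle_rank_def)
qed

lemma cycle_rank_insert_ge:
  assumes "finite V" and "finite H" and "u \<in> V" and "v \<in> V"
  shows "cycle_rank V H \<le> cycle_rank V (insert {u, v} H)"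
proof (cases "{u, v} \<in> H")
  case False
  then show ?thesis
    using cycle_rank_insert_reachable[OF assms(2) _ False] cycle_rank_insert_unreachable[OF assms]
    by (cases "reachable H u v") auto
qed (simp add: insert_absorb)

lemma cycle_rank_mono:
  assumes "graph V H'" and "H \<subseteq> H'"
  shows "cycle_rank V H \<le> cycle_rank V H'"
proof -
  have fin: "finite V" "finite H'" using assms(1) finite_graph_edges by (auto simp: graph_def)
  have "cycle_rank V H \<le> cycle_rank V (H \<union> F)" if "finite F" "F \<subseteq> H'" for F
    using that
  proof (induction F rule: finite_induct)
    case (insert f F)
    then have "f \<in> H'" by simp
    then obtain a b where ab: "a \<noteq> b" "a \<in> V" "b \<in> V" "f = {a, b}"
      using graph_edgeE[OF assms(1)] by blast
    have "finite (H \<union> F)" using finite_subset[OF assms(2) fin(2)] insert.hyps(1) by simp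
    from cycle_rank_insert_ge[OF fin(1) this ab(2,3)]
    have "cycle_rank V (H \<union> F) \<le> cycle_rank V (H \<union> insert f F)" using ab(4) by simp
    with insert show ?case by simp
  qed simp
  then have "cycle_rank V H \<le> cycle_rank V (H \<union> (H' - H))" using fin(2) by blast
  also have "H \<union> (H' - H) = H'" using assms(2) by blast
  finally show ?thesis .
qed

lemma cycle_rank_empty: "cycle_rank V {} = 0"
proof -
  have "components V {} = (\<lambda>x. {x}) ` V"
    unfolding components_def component_def reachable_empty by auto
  moreover have "card ((\<lambda>x. {x}) ` V) = card V" by (rule card_image) (simp add: inj_on_def)
  ultimately show ?thesis by (simp add: cycle_rank_def)
qed

lemma card_edges_connected:
  assumes "finite V" and "connected_graph V H"
  shows "int (card H) = int (card V) - 1 + cycle_rank V H"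
proof -
  have "component V H x = V" if "x \<in> V" for x
    using assms(2) that by (auto simp: connected_graph_def component_def)
  then have "components V H = {V}"
    using assms(2) by (auto simp: components_def connected_graph_def)
  then show ?thesis by (simp add: cycle_rank_def)
qed

lemma cycle_rank_add_triangle:
  assumes "finite V" and "finite H" and "a \<in> V" "b \<in> V" "c \<in> V"
    and "\<not> reachable H a b" "\<not> reachable H b c" "\<not> reachable H a c"
  shows "cycle_rank V (insert {a, c} (insert {b, c} (insert {a, b} H))) = cycle_rank V H + 1"
proof -
  let ?H1 = "insert {a, b} H"
  let ?H2 = "insert {b, c} ?H1"
  have "\<not> reachable ?H1 b c"
    using assms(6-8) unfolding reachable_insert by (auto dest: reachable_sym)
  then have "cycle_rank V ?H2 = cycle_rank V ?H1"
    using cycle_rank_insert_unreachable[OF assms(1) _ assms(4,5)] assms(2) by simp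
  also have "\<dots> = cycle_rank V H"
    by (rule cycle_rank_insert_unreachable[OF assms(1,2,3,4,6)])
  finally have H2: "cycle_rank V ?H2 = cycle_rank V H" .
  have "reachable ?H2 a c"
    using reachable_trans[OF reachable_edge[of a b] reachable_edge[of b c]] by simp
  moreover have "{a, c} \<notin> ?H2"
    using assms(6-8) reachable_edge[of a c H] by (auto simp: doubleton_eq_iff)
  ultimately show ?thesis using assms(2) H2 by (simp add: cycle_rank_insert_reachable)
qed

section \<open>Chordal graphs\<close>

lemma triangle_of_3_cycle:
  assumes "is_cycle V E xs" and "length xs = 3"
  shows "set xs \<in> triangles E"
proof -
  obtain a b c where xs: "xs = [a, b, c]"
    using assms(2) by (auto simp: numeral_3_eq_3 length_Suc_conv)
  have "cycle_edges xs = {{c, a}, {a, b}, {b, c}}"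
    using xs cycle_edges_conv_path_edges[of xs] by simp
  then have "{a, b} \<in> E" "{b, c} \<in> E" "{a, c} \<in> E" "a \<noteq> b" "b \<noteq> c" "a \<noteq> c"
    using assms(1) xs by (auto simp: is_cycle_def insert_commute)
  then show ?thesis using xs unfolding triangles_def by auto
qed

lemma chord_index_bounds:
  assumes "is_cycle V H zs" and "j < length zs"
    and "zs ! j \<noteq> hd zs" and "{hd zs, zs ! j} \<notin> cycle_edges zs"
  shows "2 \<le> j \<and> j + 2 \<le> length zs"
proof -
  let ?n = "length zs"
  have n3: "?n \<ge> 3" and ne: "zs \<noteq> []" using assms(1) by (auto simp: is_cycle_def)
  have ce: "cycle_edges zs = insert {last zs, hd zs} (path_edges zs)"
    using cycle_edges_conv_path_edges[OF ne] .
  have "j \<noteq> 0"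
  proof
    assume "j = 0"
    with assms(3) ne show False by (simp add: hd_conv_nth)
  qed
  moreover have "j \<noteq> 1"
  proof
    assume "j = 1"
    then have "{hd zs, zs ! j} \<in> path_edges zs"
      using n3 ne by (auto simp: path_edges_conv_nth hd_conv_nth)
    then show False using assms(4) ce by simp
  qed
  moreover have "j \<noteq> ?n - 1"
  proof
    assume "j = ?n - 1"
    then have "last zs = zs ! j" using ne by (simp add: last_conv_nth)
    then show False using assms(4) ce by (simp add: insert_commute)
  qed
  ultimately show ?thesis using assms(2) by auto
qed

lemma cycle_split_by_chord_at_hd:
  assumes "graph V E" and zs: "is_cycle V E zs" "hd zs = u"
    and chord: "v \<in> set zs" "{u, v} \<in> E" "{u, v} \<notin> cycle_edges zs"
  obtains Z1 Z2 where "is_cycle V E Z1" "is_cycle V E Z2"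
    "length Z1 < length zs" "length Z2 < length zs" "set Z1 \<subseteq> set zs" "set Z2 \<subseteq> set zs"
    "cycle_edges zs \<subseteq> cycle_edges Z1 \<union> cycle_edges Z2"
proof -
  let ?n = "length zs"
  have dist: "distinct zs" and sV: "set zs \<subseteq> V" and cE: "cycle_edges zs \<subseteq> E"
    and ne: "zs \<noteq> []" using zs(1) by (auto simp: is_cycle_def)
  have ce: "cycle_edges zs = insert {last zs, u} (path_edges zs)"
    using cycle_edges_conv_path_edges[OF ne] zs(2) by simp
  obtain j where j: "j < ?n" "zs ! j = v" using chord(1) by (auto simp: in_set_conv_nth)
  have "u \<noteq> v" using graph_edge_vertices(1)[OF assms(1) chord(2)] .
  then have j2: "2 \<le> j" "j + 2 \<le> ?n"
    using chord_index_bounds[OF zs(1) j(1)] j(2) zs(2) chord(3) by auto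
  define Z1 where "Z1 = take (Suc j) zs"
  define Z2 where "Z2 = u # drop j zs"
  have dne: "drop j zs \<noteq> []" using j(1) by simp
  have ceZ1: "cycle_edges Z1 = insert {u, v} (path_edges Z1)"
    using cycle_edges_conv_path_edges[of Z1] j zs(2) ne
    by (simp add: Z1_def last_conv_nth insert_commute)
  have ceZ2: "cycle_edges Z2 = insert {last zs, u} (insert {u, v} (path_edges (drop j zs)))"
    using cycle_edges_conv_path_edges[of Z2] path_edges_Cons[OF dne, of u] dne j
    by (simp add: Z2_def hd_drop_conv_nth)
  have last_edge: "{last zs, u} \<in> E" using ce cE by blast
  have pe: "path_edges zs \<subseteq> E" using ce cE by blast
  obtain w where "zs = u # w" using ne zs(2) by (cases zs) auto
  then have "u \<notin> set (drop j zs)" using dist j2 by (cases j) (auto dest: in_set_dropD)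
  then have "is_cycle V E Z2"
    using j2 dist sV zs(2) ne set_drop_subset[of j zs] path_edges_drop[of j zs] pe last_edge chord(2)
    unfolding is_cycle_def ceZ2 by (auto simp: Z2_def)
  moreover have "is_cycle V E Z1"
    using j2 dist sV set_take_subset[of "Suc j" zs] path_edges_take[of "Suc j" zs] pe chord(2)
    unfolding is_cycle_def ceZ1 by (auto simp: Z1_def)
  moreover have "length Z1 < ?n" "length Z2 < ?n" using j2 by (simp_all add: Z1_def Z2_def)
  moreover have "set Z1 \<subseteq> set zs" "set Z2 \<subseteq> set zs"
    using set_take_subset[of "Suc j" zs] set_drop_subset[of j zs] hd_in_set[OF ne] zs(2)
    by (auto simp: Z1_def Z2_def)
  moreover have "cycle_edges zs \<subseteq> cycle_edges Z1 \<union> cycle_edges Z2"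
    unfolding ce ceZ1 ceZ2 path_edges_take_drop[OF j(1)] by (auto simp: Z1_def)
  ultimately show ?thesis using that by blast
qed

lemma cycle_split_by_chord:
  assumes "graph V E" and "is_cycle V E zs"
    and "u \<in> set zs" "v \<in> set zs" "{u, v} \<in> E" "{u, v} \<notin> cycle_edges zs"
  obtains Z1 Z2 where "is_cycle V E Z1" "is_cycle V E Z2"
    "length Z1 < length zs" "length Z2 < length zs" "set Z1 \<subseteq> set zs" "set Z2 \<subseteq> set zs"
    "cycle_edges zs \<subseteq> cycle_edges Z1 \<union> cycle_edges Z2"
proof -
  obtain i where i: "i < length zs" "zs ! i = u" using assms(3) by (auto simp: in_set_conv_nth)
  let ?ys = "rotate i zs"
  have "zs \<noteq> []" using i(1) by auto
  then have hd: "hd ?ys = u" using i by (simp add: hd_rotate_conv_nth)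
  have cyc: "is_cycle V E ?ys" using assms(2) by (simp add: is_cycle_rotate)
  show ?thesis
  proof (rule cycle_split_by_chord_at_hd[OF assms(1) cyc hd])
    show "v \<in> set ?ys" "{u, v} \<in> E" "{u, v} \<notin> cycle_edges ?ys"
      using assms(4-6) by (simp_all add: cycle_edges_rotate)
  qed (rule that, simp_all add: cycle_edges_rotate)
qed

lemma chordal_cycle_edge_in_triangle:
  assumes "graph V E" and "chordal V E" and "is_cycle V E zs" and "d \<in> cycle_edges zs"
  shows "\<exists>t\<in>triangles E. d \<subseteq> t \<and> t \<subseteq> set zs"
  using assms(3,4)
proof (induction "length zs" arbitrary: zs rule: less_induct)
  case less
  show ?case
  proof (cases "induced_cycle V E zs")
    case True
    then have "length zs = 3"
      using assms(2) less.prems(1) by (auto simp: chordal_def is_cycle_def)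
    then show ?thesis
      using triangle_of_3_cycle[OF less.prems(1)] cycle_edge_subset_set[OF less.prems(2)] by blast
  next
    case False
    then obtain u v where "u \<in> set zs" "v \<in> set zs" "{u, v} \<in> E" "{u, v} \<notin> cycle_edges zs"
      using less.prems(1) unfolding induced_cycle_def by blast
    then obtain Z1 Z2 where Z: "is_cycle V E Z1" "is_cycle V E Z2"
      "length Z1 < length zs" "length Z2 < length zs" "set Z1 \<subseteq> set zs" "set Z2 \<subseteq> set zs"
      "cycle_edges zs \<subseteq> cycle_edges Z1 \<union> cycle_edges Z2"
      using cycle_split_by_chord[OF assms(1) less.prems(1)] by blast
    show ?thesis
    proof (cases "d \<in> cycle_edges Z1")
      case True
      then show ?thesis using less.hyps[OF Z(3,1)] Z(5) by blast
    next
      case False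
      then have "d \<in> cycle_edges Z2" using Z(7) less.prems(2) by blast
      then show ?thesis using less.hyps[OF Z(4,2)] Z(6) by blast
    qed
  qed
qed

lemma non_triangle_edge_not_reachable:
  assumes "graph V E" and "chordal V E" and "{x, y} \<in> non_triangle_edges E"
    and "K \<subseteq> E" and "{x, y} \<notin> K"
  shows "\<not> reachable K x y"
proof
  assume r: "reachable K x y"
  have xy: "{x, y} \<in> E" using assms(3) by (simp add: non_triangle_edges_def)
  note xy_props = graph_edge_vertices[OF assms(1) xy]
  obtain ps where ps: "is_cycle V (insert {x, y} K) ps" "cycle_edges ps = insert {x, y} (path_edges ps)"
    using cycle_closing_path[OF graph_subset[OF assms(1,4)] xy_props(2) r assms(5) xy_props(1)] .
  have "insert {x, y} K \<subseteq> E" using xy assms(4) by blast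
  with ps(1) have "is_cycle V E ps" by (rule is_cycle_mono)
  moreover have "{x, y} \<in> cycle_edges ps" using ps(2) by simp
  ultimately obtain t where "t \<in> triangles E" "{x, y} \<subseteq> t"
    using chordal_cycle_edge_in_triangle[OF assms(1,2)] by blast
  then show False using assms(3) by (auto simp: non_triangle_edges_def)
qed

lemma cycle_rank_union_non_triangle_edges:
  assumes "graph V E" and "chordal V E" and "K \<subseteq> E" and "D \<subseteq> non_triangle_edges E"
  shows "cycle_rank V (K \<union> D) = cycle_rank V K"
proof -
  have nt: "non_triangle_edges E \<subseteq> E" by (auto simp: non_triangle_edges_def)
  have fin: "finite V" "finite E" using assms(1) finite_graph_edges by (auto simp: graph_def)
  have "finite D" using assms(4) nt by (blast intro: finite_subset[OF _ fin(2)])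
  then show ?thesis
    using assms(4)
  proof (induction D rule: finite_induct)
    case (insert d D)
    then have IH: "cycle_rank V (K \<union> D) = cycle_rank V K" by simp
    have d: "d \<in> non_triangle_edges E" using insert.prems by simp
    have KD: "K \<union> D \<subseteq> E" using assms(3) insert.prems nt by blast
    then have fin_KD: "finite (K \<union> D)" by (rule finite_subset[OF _ fin(2)])
    show ?case
    proof (cases "d \<in> K \<union> D")
      case True
      then have "K \<union> insert d D = K \<union> D" by blast
      then show ?thesis using IH by simp
    next
      case False
      obtain x y where xy: "x \<noteq> y" "x \<in> V" "y \<in> V" "d = {x, y}"
        using graph_edgeE[OF assms(1)] d nt by blast
      have "\<not> reachable (K \<union> D) x y"
        using non_triangle_edge_not_reachable[OF assms(1,2) _ KD] d False xy(4) by simp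
      then have "cycle_rank V (insert {x, y} (K \<union> D)) = cycle_rank V (K \<union> D)"
        by (rule cycle_rank_insert_unreachable[OF fin(1) fin_KD xy(2,3)])
      then show ?thesis using IH xy(4) by simp
    qed
  qed simp
qed

section \<open>Berge-acyclic families of triangles\<close>

lemma mem_hyp_graph_edges:
  "f \<in> hyp_graph_edges T \<longleftrightarrow> (\<exists>u v e. f = {u, v} \<and> u \<noteq> v \<and> e \<in> T \<and> u \<in> e \<and> v \<in> e)"
  unfolding hyp_graph_edges_def by auto

lemma hyp_graph_edgesI: "u \<noteq> v \<Longrightarrow> e \<in> T \<Longrightarrow> u \<in> e \<Longrightarrow> v \<in> e \<Longrightarrow> {u, v} \<in> hyp_graph_edges T"
  unfolding hyp_graph_edges_def by blast

lemma hyp_graph_edgesE: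
  assumes "{u, v} \<in> hyp_graph_edges T"
  obtains e where "e \<in> T" "u \<in> e" "v \<in> e" "u \<noteq> v"
proof -
  obtain u' v' e where "{u, v} = {u', v'}" "u' \<noteq> v'" "e \<in> T" "u' \<in> e" "v' \<in> e"
    using assms unfolding mem_hyp_graph_edges by blast
  then show ?thesis using that by (auto simp: doubleton_eq_iff)
qed

lemma hyp_graph_edges_empty [simp]: "hyp_graph_edges {} = {}"
  unfolding hyp_graph_edges_def by simp

lemma hyp_graph_edges_insert:
  "hyp_graph_edges (insert t T) = hyp_graph_edges {t} \<union> hyp_graph_edges T"
proof (intro equalityI subsetI)
  fix f assume "f \<in> hyp_graph_edges (insert t T)"
  then obtain u v e where "f = {u, v}" "u \<noteq> v" "e \<in> insert t T" "u \<in> e" "v \<in> e"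
    unfolding mem_hyp_graph_edges by blast
  then show "f \<in> hyp_graph_edges {t} \<union> hyp_graph_edges T"
    unfolding Un_iff mem_hyp_graph_edges by blast
next
  fix f assume "f \<in> hyp_graph_edges {t} \<union> hyp_graph_edges T"
  then obtain u v e where "f = {u, v}" "u \<noteq> v" "e \<in> insert t T" "u \<in> e" "v \<in> e"
    unfolding Un_iff mem_hyp_graph_edges by blast
  then show "f \<in> hyp_graph_edges (insert t T)" unfolding mem_hyp_graph_edges by blast
qed

lemma hyp_graph_edges_mono: "T \<subseteq> T' \<Longrightarrow> hyp_graph_edges T \<subseteq> hyp_graph_edges T'"
  unfolding subset_iff[of "hyp_graph_edges T"] mem_hyp_graph_edges by blast

lemma hyp_graph_edges_triangle:
  assumes "a \<noteq> b" "b \<noteq> c" "a \<noteq> c"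
  shows "hyp_graph_edges {{a, b, c}} = {{a, b}, {b, c}, {a, c}}"
proof
  show "hyp_graph_edges {{a, b, c}} \<subseteq> {{a, b}, {b, c}, {a, c}}"
    unfolding mem_hyp_graph_edges subset_iff by (auto simp: insert_commute)
  show "{{a, b}, {b, c}, {a, c}} \<subseteq> hyp_graph_edges {{a, b, c}}"
    using assms by (auto intro: hyp_graph_edgesI)
qed

lemma triangleE:
  assumes "t \<in> triangles E"
  obtains a b c where "t = {a, b, c}" "a \<noteq> b" "b \<noteq> c" "a \<noteq> c"
    "{a, b} \<in> E" "{b, c} \<in> E" "{a, c} \<in> E"
  using assms unfolding triangles_def by blast

lemma triangle_through_edge:
  assumes "t \<in> triangles E" and "p \<in> t" "q \<in> t" "p \<noteq> q"
  obtains r where "t = {p, q, r}" "r \<noteq> p" "r \<noteq> q"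
proof -
  obtain a b c where "t = {a, b, c}" "a \<noteq> b" "b \<noteq> c" "a \<noteq> c" using triangleE[OF assms(1)] by blast
  with assms(2-4) that show ?thesis by (auto simp: insert_commute)
qed

lemma hyp_graph_edges_subset:
  assumes "T \<subseteq> triangles E"
  shows "hyp_graph_edges T \<subseteq> E"
proof
  fix f assume "f \<in> hyp_graph_edges T"
  then obtain u v e where uv: "f = {u, v}" "u \<noteq> v" "e \<in> T" "u \<in> e" "v \<in> e"
    unfolding mem_hyp_graph_edges by blast
  obtain a b c where "e = {a, b, c}" "{a, b} \<in> E" "{b, c} \<in> E" "{a, c} \<in> E"
    using triangleE assms uv(3) by blast
  with uv show "f \<in> E" by (auto simp: insert_commute)
qed

lemma triangle_subset_vertices:
  assumes "graph V E" and "t \<in> triangles E"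
  shows "t \<subseteq> V"
  using assms(2) graph_edge_vertices[OF assms(1)] by (elim triangleE) auto

lemma finite_triangles:
  assumes "graph V E"
  shows "finite (triangles E)"
proof -
  have "triangles E \<subseteq> Pow V" using triangle_subset_vertices[OF assms] by blast
  moreover have "finite V" using assms by (simp add: graph_def)
  ultimately show ?thesis by (rule finite_subset[OF _ finite_Pow_iff[THEN iffD2]])
qed

lemma berge_acyclic_mono: "berge_acyclic W T \<Longrightarrow> T' \<subseteq> T \<Longrightarrow> berge_acyclic W' T'"
  unfolding berge_acyclic_def berge_cycle_def by blast

lemma berge_acyclic_eq_if_two_common:
  assumes "berge_acyclic W T" "t1 \<in> T" "t2 \<in> T" "x \<noteq> y" "x \<in> t1" "y \<in> t1" "x \<in> t2" "y \<in> t2"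
  shows "t1 = t2"
proof (rule ccontr)
  assume "t1 \<noteq> t2"
  have "berge_cycle T [t1, t2] [x, y]"
    unfolding berge_cycle_def
  proof (intro conjI allI impI)
    fix i assume "i < length [x, y]"
    then have "i = 0 \<or> i = 1" by auto
    then show "[x, y] ! i \<in> [t1, t2] ! i \<inter> [t1, t2] ! ((i + 1) mod length [t1, t2])"
      using assms by auto
  qed (use assms \<open>t1 \<noteq> t2\<close> in auto)
  then show False using assms(1) unfolding berge_acyclic_def by blast
qed

lemma berge_acyclic_hyp_graph_edges_disjoint:
  assumes "berge_acyclic W T" and "t \<in> T"
  shows "hyp_graph_edges (T - {t}) \<inter> hyp_graph_edges {t} = {}"
proof -
  have False if f: "f \<in> hyp_graph_edges (T - {t})" "f \<in> hyp_graph_edges {t}" for f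
  proof -
    obtain u v e where uv: "f = {u, v}" "u \<noteq> v" "e \<in> T - {t}" "u \<in> e" "v \<in> e"
      using f(1) unfolding mem_hyp_graph_edges by blast
    then have "u \<in> t" "v \<in> t" using f(2) by (auto elim: hyp_graph_edgesE)
    then have "e = t" using berge_acyclic_eq_if_two_common[OF assms(1) _ assms(2) uv(2)] uv(3-5) by blast
    then show False using uv(3) by simp
  qed
  then show ?thesis by blast
qed

definition berge_path :: "'a set set \<Rightarrow> 'a set list \<Rightarrow> 'a list \<Rightarrow> bool" where
  "berge_path T Es xs \<longleftrightarrow> length xs = Suc (length Es) \<and> distinct Es \<and> distinct xs \<and>
     set Es \<subseteq> T \<and> (\<forall>i < length Es. xs ! i \<in> Es ! i \<and> xs ! Suc i \<in> Es ! i)"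

lemma berge_path_take:
  assumes "berge_path T Es xs" and "m < length xs"
  shows "berge_path T (take m Es) (take (Suc m) xs)"
  using assms set_take_subset[of m Es] unfolding berge_path_def by auto

lemma berge_path_extend:
  assumes "berge_path T Es xs" and "m \<le> length Es" and "F \<in> T" and "F \<notin> set (take m Es)"
    and "xs ! m \<in> F" and "y \<in> F" and "y \<notin> set (take (Suc m) xs)"
  shows "berge_path T (take m Es @ [F]) (take (Suc m) xs @ [y])"
proof -
  have len: "length (take (Suc m) xs) = Suc m" "length (take m Es) = m"
    using assms(1,2) by (auto simp: berge_path_def)
  have "(take (Suc m) xs @ [y]) ! i \<in> (take m Es @ [F]) ! i \<and>
        (take (Suc m) xs @ [y]) ! Suc i \<in> (take m Es @ [F]) ! i" if "i < Suc m" for i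
  proof (cases "i = m")
    case True
    then show ?thesis using len assms(5,6) by (simp add: nth_append)
  next
    case False
    with that have "i < m" by simp
    then show ?thesis using len assms(1,2) by (auto simp: nth_append berge_path_def)
  qed
  then show ?thesis
    using assms len set_take_subset[of m Es] unfolding berge_path_def by auto
qed

lemma reachable_berge_path:
  assumes "reachable (hyp_graph_edges T) x y"
  obtains Es xs where "berge_path T Es xs" "hd xs = x" "last xs = y"
proof -
  have "(x, y) \<in> (adj_rel (hyp_graph_edges T))\<^sup>*" using assms by (simp add: reachable_def)
  then have "\<exists>Es xs. berge_path T Es xs \<and> hd xs = x \<and> last xs = y"
  proof (induction rule: rtrancl_induct)
    case base
    have "berge_path T [] [x]" by (simp add: berge_path_def)
    then show ?case by force
  next
    case (step z y)
    then obtain Es xs where p: "berge_path T Es xs" "hd xs = x" "last xs = z" by blast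
    have len: "length xs = Suc (length Es)" and dist: "distinct Es"
      and edges: "\<And>i. i < length Es \<Longrightarrow> xs ! i \<in> Es ! i"
      using p(1) by (auto simp: berge_path_def)
    have ne: "xs \<noteq> []" using len by auto
    have hd_take: "hd (take (Suc m) xs) = x" for m using p(2) ne by simp
    have "{z, y} \<in> hyp_graph_edges T" using step(2) by (simp add: adj_rel_def)
    then obtain F where F: "F \<in> T" "z \<in> F" "y \<in> F" by (elim hyp_graph_edgesE)
    show ?case
    proof (cases "y \<in> set xs")
      case True
      then obtain m where m: "m < length xs" "xs ! m = y" by (auto simp: in_set_conv_nth)
      have "last (take (Suc m) xs) = y" using m by (simp add: take_Suc_conv_app_nth)
      then show ?thesis using berge_path_take[OF p(1) m(1)] hd_take by blast
    next
      case y_new: False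
      \<comment> \<open>If F already occurs on the path, cut the path there to keep its hyperedges distinct.\<close>
      obtain m where m: "m \<le> length Es" "F \<notin> set (take m Es)" "xs ! m \<in> F"
      proof (cases "F \<in> set Es")
        case True
        then obtain m where "m < length Es" "Es ! m = F" by (auto simp: in_set_conv_nth)
        moreover from this have "F \<notin> set (take m Es)"
          using dist by (auto simp: in_set_conv_nth nth_eq_iff_index_eq)
        ultimately show ?thesis using that[of m] edges by auto
      next
        case False
        have "xs ! length Es = z" using p(3) len ne by (simp add: last_conv_nth)
        then show ?thesis using that[of "length Es"] False F(2) by simp
      qed
      have "y \<notin> set (take (Suc m) xs)" using y_new set_take_subset by fast
      moreover have "hd (take (Suc m) xs @ [y]) = x" using hd_take[of m] ne by simp
      ultimately show ?thesis using berge_path_extend[OF p(1) m(1) F(1) m(2,3) F(3)] by fastforce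
    qed
  qed
  then show ?thesis using that by blast
qed

lemma berge_path_close:
  assumes "berge_path T Es xs" and "t \<notin> T" and "hd xs \<in> t" "last xs \<in> t" "hd xs \<noteq> last xs"
  shows "berge_cycle (insert t T) (Es @ [t]) (tl xs @ [hd xs])"
proof -
  let ?k = "length Es" and ?Es' = "Es @ [t]" and ?xs' = "tl xs @ [hd xs]"
  have len: "length xs = Suc ?k" and dist: "distinct Es" "distinct xs" and sub: "set Es \<subseteq> T"
    and edges: "\<And>i. i < ?k \<Longrightarrow> xs ! i \<in> Es ! i \<and> xs ! Suc i \<in> Es ! i"
    using assms(1) unfolding berge_path_def by auto
  have ne: "xs \<noteq> []" using len by auto
  have x0: "xs ! 0 = hd xs" using ne by (simp add: hd_conv_nth)
  have yk: "xs ! ?k = last xs" using len ne by (simp add: last_conv_nth)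
  have "?k \<noteq> 0" using x0 yk assms(5) by auto
  have len': "length ?Es' = Suc ?k" "length ?xs' = Suc ?k" using len by simp_all
  have xs'_nth: "?xs' ! i = (if i < ?k then xs ! Suc i else hd xs)" if "i \<le> ?k" for i
    using that len by (auto simp: nth_append nth_tl)
  have Es'_nth: "?Es' ! i = (if i < ?k then Es ! i else t)" if "i \<le> ?k" for i
    using that by (auto simp: nth_append)
  show ?thesis
    unfolding berge_cycle_def
  proof (intro conjI allI impI)
    show "2 \<le> length ?Es'" "length ?xs' = length ?Es'" using len' \<open>?k \<noteq> 0\<close> by linarith+
    show "distinct ?Es'" using dist(1) sub assms(2) by auto
    have "hd xs \<notin> set (tl xs)" using dist(2) ne by (cases xs) auto
    then show "distinct ?xs'" using dist(2) by (simp add: distinct_tl)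
    show "set ?Es' \<subseteq> insert t T" using sub by auto
    fix i assume "i < length ?xs'"
    then have i: "i \<le> ?k" using len' by simp
    show "?xs' ! i \<in> ?Es' ! i \<inter> ?Es' ! ((i + 1) mod length ?Es')"
    proof (cases "i < ?k")
      case True
      have "xs ! Suc i \<in> ?Es' ! ((i + 1) mod length ?Es')"
      proof (cases "Suc i < ?k")
        case False
        with True have "Suc i = ?k" by simp
        then show ?thesis using yk assms(4) len' by (simp add: Es'_nth)
      qed (use edges len' in \<open>simp add: Es'_nth\<close>)
      then show ?thesis using edges[OF True] True by (simp add: xs'_nth Es'_nth)
    next
      case False
      then have "i = ?k" using i by simp
      then show ?thesis
        using edges[of 0] x0 assms(3) \<open>?k \<noteq> 0\<close> len' by (simp add: xs'_nth Es'_nth)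
    qed
  qed
qed

lemma berge_acyclic_insert_not_reachable:
  assumes "berge_acyclic W (insert t T)" and "t \<notin> T" and "x \<in> t" "y \<in> t" "x \<noteq> y"
  shows "\<not> reachable (hyp_graph_edges T) x y"
proof
  assume "reachable (hyp_graph_edges T) x y"
  then obtain Es xs where "berge_path T Es xs" "hd xs = x" "last xs = y"
    by (rule reachable_berge_path)
  then have "berge_cycle (insert t T) (Es @ [t]) (tl xs @ [hd xs])"
    using berge_path_close[OF _ assms(2)] assms(3-5) by blast
  then show False using assms(1) unfolding berge_acyclic_def by blast
qed

lemma berge_cycle_reachable_avoiding:
  assumes "berge_cycle (insert t T) Es xs" and "k < length Es" and "Es ! k = t" and "j < length Es"
  shows "reachable (hyp_graph_edges T) (xs ! k) (xs ! ((k + j) mod length Es))"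
  using assms(4)
proof (induction j)
  case (Suc j)
  let ?n = "length Es"
  let ?a = "(k + j) mod ?n" and ?b = "(k + Suc j) mod ?n"
  have n: "0 < ?n" "length xs = ?n" "distinct Es" "set Es \<subseteq> insert t T"
    and cond: "\<And>i. i < ?n \<Longrightarrow> xs ! i \<in> Es ! i \<inter> Es ! ((i + 1) mod ?n)"
    using assms(1,2) unfolding berge_cycle_def by auto
  have ab: "?a < ?n" "?b < ?n" "(?a + 1) mod ?n = ?b" using n(1) by (simp_all add: mod_Suc_eq)
  have "?b \<noteq> k"
  proof
    assume "?b = k"
    then have "(k + Suc j) mod ?n = k mod ?n" using assms(2) by simp
    then have "?n dvd Suc j" using mod_eq_dvd_iff_nat[of k "k + Suc j" ?n] by simp
    then show False using Suc.prems by (auto dest: dvd_imp_le)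
  qed
  then have "Es ! ?b \<noteq> t" using nth_eq_iff_index_eq[OF n(3) ab(2) assms(2)] assms(3) by simp
  then have "Es ! ?b \<in> T" using n(4) nth_mem[OF ab(2)] by blast
  moreover have "xs ! ?a \<in> Es ! ?b" "xs ! ?b \<in> Es ! ?b" using cond[OF ab(1)] cond[OF ab(2)] ab(3) by simp_all
  ultimately have "reachable (hyp_graph_edges T) (xs ! ?a) (xs ! ?b)"
    by (cases "xs ! ?a = xs ! ?b") (auto intro: reachable_edge hyp_graph_edgesI)
  with Suc show ?case by (simp add: reachable_trans[of _ _ "xs ! ?a"])
qed (use assms(2) in simp)

lemma berge_acyclic_insert:
  assumes "berge_acyclic W T" and "t \<notin> T"
    and "\<And>x y. x \<in> t \<Longrightarrow> y \<in> t \<Longrightarrow> x \<noteq> y \<Longrightarrow> \<not> reachable (hyp_graph_edges T) x y"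
  shows "berge_acyclic W' (insert t T)"
  unfolding berge_acyclic_def
proof
  assume "\<exists>Es xs. berge_cycle (insert t T) Es xs"
  then obtain Es xs where bc: "berge_cycle (insert t T) Es xs" by blast
  let ?n = "length Es"
  have n: "?n \<ge> 2" "length xs = ?n" "distinct xs"
    and cond: "\<And>i. i < ?n \<Longrightarrow> xs ! i \<in> Es ! i \<inter> Es ! ((i + 1) mod ?n)"
    using bc unfolding berge_cycle_def by auto
  show False
  proof (cases "t \<in> set Es")
    case False
    then have "berge_cycle T Es xs" using bc unfolding berge_cycle_def by auto
    then show False using assms(1) unfolding berge_acyclic_def by blast
  next
    case True
    then obtain k where k: "k < ?n" "Es ! k = t" by (auto simp: in_set_conv_nth)
    \<comment> \<open>The vertices before and after t on the cycle both lie in t.\<close>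
    let ?p = "(k + (?n - 1)) mod ?n"
    have p1: "?p < ?n" using n(1) by (intro mod_less_divisor) auto
    have "(?p + 1) mod ?n = (k + (?n - 1) + 1) mod ?n" by (simp add: mod_Suc_eq)
    also have "k + (?n - 1) + 1 = k + ?n" using n(1) by simp
    finally have p2: "(?p + 1) mod ?n = k" using k(1) by simp
    note p = p1 p2
    have "?p \<noteq> k"
    proof
      assume "?p = k"
      with p(2) have "(k + 1) mod ?n = k" by simp
      moreover have "k + 1 = ?n" if "\<not> k + 1 < ?n" using that k(1) by simp
      ultimately show False using n(1) by (cases "k + 1 < ?n") auto
    qed
    then have "xs ! k \<noteq> xs ! ?p" using nth_eq_iff_index_eq[OF n(3)] k(1) p(1) n(2) by simp
    moreover have "xs ! k \<in> t" "xs ! ?p \<in> t" using cond[OF k(1)] cond[OF p(1)] k(2) p(2) by auto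
    moreover have "reachable (hyp_graph_edges T) (xs ! k) (xs ! ?p)"
      using berge_cycle_reachable_avoiding[OF bc k, of "?n - 1"] n(1) by simp
    ultimately show False using assms(3) by blast
  qed
qed

lemma cycle_rank_hyp_graph_edges:
  assumes "graph V E" and "T \<subseteq> triangles E" and "berge_acyclic W T"
  shows "cycle_rank V (hyp_graph_edges T) = int (card T)"
proof -
  have fin: "finite V" "finite E" using assms(1) finite_graph_edges by (auto simp: graph_def)
  have "finite T" using assms(2) finite_triangles[OF assms(1)] finite_subset by blast
  then show ?thesis
    using assms(2,3)
  proof (induction T rule: finite_induct)
    case empty
    show ?case by (simp add: cycle_rank_empty)
  next
    case (insert t T)
    have IH: "cycle_rank V (hyp_graph_edges T) = int (card T)"
      using insert berge_acyclic_mono[OF insert.prems(2)] by blast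
    obtain a b c where abc: "t = {a, b, c}" "a \<noteq> b" "b \<noteq> c" "a \<noteq> c" "{a, b} \<in> E" "{b, c} \<in> E"
      using insert.prems(1) by (auto elim: triangleE)
    have V: "a \<in> V" "b \<in> V" "c \<in> V" using graph_edge_vertices[OF assms(1)] abc(5,6) by auto
    have fin_H: "finite (hyp_graph_edges T)"
      using hyp_graph_edges_subset[of T E] insert.prems(1) fin(2) finite_subset by blast
    have nr: "\<not> reachable (hyp_graph_edges T) x y" if "x \<in> t" "y \<in> t" "x \<noteq> y" for x y
      using berge_acyclic_insert_not_reachable[OF insert.prems(2) insert.hyps(2) that] .
    have "hyp_graph_edges (insert t T) = insert {a, c} (insert {b, c} (insert {a, b} (hyp_graph_edges T)))"
      using hyp_graph_edges_insert[of t T] hyp_graph_edges_triangle[OF abc(2-4)] abc(1) by auto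
    then show ?case
      using cycle_rank_add_triangle[OF fin(1) fin_H V] nr abc insert.hyps IH by simp
  qed
qed

section \<open>The joining process\<close>

lemma join_step_invariants:
  assumes "graph V E" and "join_step V E H H'" and "H \<subseteq> E"
  shows "H' \<subseteq> E" "H \<subseteq> H'" "cycle_rank V H' = cycle_rank V H"
proof -
  obtain u v where uv: "u \<in> V" "v \<in> V" "{u, v} \<in> E" "\<not> reachable H u v" "H' = insert {u, v} H"
    using assms(2) unfolding join_step_def by blast
  have "finite V" "finite H"
    using assms(1) finite_graph_edges[OF graph_subset[OF assms(1,3)]] by (auto simp: graph_def)
  then show "cycle_rank V H' = cycle_rank V H"
    using cycle_rank_insert_unreachable uv by simp
  show "H' \<subseteq> E" "H \<subseteq> H'" using uv assms(3) by auto
qed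

lemma join_steps_invariants:
  assumes "graph V E" and "(join_step V E)\<^sup>*\<^sup>* H X" and "H \<subseteq> E"
  shows "X \<subseteq> E" "H \<subseteq> X" "cycle_rank V X = cycle_rank V H"
  using assms(2)
proof (induction rule: rtranclp_induct)
  case (step Y Z)
  note inv = join_step_invariants[OF assms(1) step.hyps(2) step.IH(1)]
  show "Z \<subseteq> E" "H \<subseteq> Z" "cycle_rank V Z = cycle_rank V H"
    using inv step.IH by auto
qed (use assms(3) in simp_all)

lemma reachable_crossing_edge:
  assumes "reachable E u v" and "\<not> reachable H u v"
  obtains x y where "{x, y} \<in> E" "reachable H u x" "\<not> reachable H u y"
proof -
  have "(u, v) \<in> (adj_rel E)\<^sup>*" using assms(1) by (simp add: reachable_def)
  then have "reachable H u v \<or> (\<exists>x y. {x, y} \<in> E \<and> reachable H u x \<and> \<not> reachable H u y)"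
  proof (induction rule: rtrancl_induct)
    case (step w z)
    then have "{w, z} \<in> E" by (simp add: adj_rel_def)
    with step.IH show ?case by blast
  qed simp
  then show ?thesis using assms(2) that by blast
qed

lemma join_steps_connect:
  assumes "graph V E" and "connected_graph V E" and "H \<subseteq> E"
  shows "\<exists>X. (join_step V E)\<^sup>*\<^sup>* H X \<and> connected_graph V X"
  using assms(3)
proof (induction "card (E - H)" arbitrary: H rule: less_induct)
  case less
  show ?case
  proof (cases "connected_graph V H")
    case True
    then show ?thesis by (intro exI[of _ H]) simp
  next
    case False
    obtain u v where uv: "u \<in> V" "v \<in> V" "\<not> reachable H u v"
      using False assms(2) by (auto simp: connected_graph_def)
    then have "reachable E u v" using assms(2) by (simp add: connected_graph_def)
    then obtain x y where xy: "{x, y} \<in> E" "reachable H u x" "\<not> reachable H u y"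
      using uv(3) by (rule reachable_crossing_edge)
    have "\<not> reachable H x y" using reachable_trans[OF xy(2)] xy(3) by blast
    moreover from this have "{x, y} \<notin> H" by (metis reachable_edge)
    moreover have "x \<in> V" "y \<in> V" using graph_edge_vertices[OF assms(1) xy(1)] by simp_all
    ultimately have step: "join_step V E H (insert {x, y} H)"
      unfolding join_step_def using False xy(1) by blast
    have "card (E - insert {x, y} H) < card (E - H)"
      using xy(1) \<open>{x, y} \<notin> H\<close> finite_graph_edges[OF assms(1)]
      by (intro psubset_card_mono) auto
    moreover have "insert {x, y} H \<subseteq> E" using less.prems xy(1) by simp
    ultimately obtain X where "(join_step V E)\<^sup>*\<^sup>* (insert {x, y} H) X" "connected_graph V X"
      using less.hyps by blast
    then show ?thesis using converse_rtranclp_into_rtranclp[of "join_step V E", OF step] by blast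
  qed
qed

section \<open>Spanning cacti\<close>

definition edge_disjoint_cycles :: "'a set \<Rightarrow> 'a set set \<Rightarrow> bool" where
  "edge_disjoint_cycles V H \<longleftrightarrow> (\<forall>e\<in>H. \<forall>xs ys. is_cycle V H xs \<and> is_cycle V H ys \<and>
     e \<in> cycle_edges xs \<and> e \<in> cycle_edges ys \<longrightarrow> cycle_edges xs = cycle_edges ys)"

lemma cactus_iff: "cactus V H \<longleftrightarrow> connected_graph V H \<and> edge_disjoint_cycles V H"
  unfolding cactus_def edge_disjoint_cycles_def ..

lemma edge_disjoint_cycles_subset:
  "edge_disjoint_cycles V H' \<Longrightarrow> H \<subseteq> H' \<Longrightarrow> edge_disjoint_cycles V H"
  unfolding edge_disjoint_cycles_def using is_cycle_mono by blast

lemma closing_cycle_path_edge_not_cyclic: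
  assumes "edge_disjoint_cycles V (insert {u, v} H)" and "{u, v} \<notin> H"
    and ps: "is_cycle V (insert {u, v} H) ps" "cycle_edges ps = insert {u, v} (path_edges ps)"
    and "g \<in> path_edges ps"
  shows "g \<notin> cyclic_edges V H"
proof
  assume "g \<in> cyclic_edges V H"
  then obtain zs where zs: "is_cycle V H zs" "g \<in> cycle_edges zs" "g \<in> H"
    unfolding cyclic_edges_def by blast
  have "is_cycle V (insert {u, v} H) zs" using zs(1) by (rule is_cycle_mono) blast
  then have "cycle_edges zs = cycle_edges ps"
    using assms(1,5) ps zs(2,3) unfolding edge_disjoint_cycles_def by blast
  then have "{u, v} \<in> H" using ps(2) zs(1) by (auto simp: is_cycle_def)
  then show False using assms(2) by simp
qed

lemma closing_cycle_vertices_separated: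
  assumes "graph V H" and "edge_disjoint_cycles V (insert {u, v} H)" and "{u, v} \<notin> H"
    and ps: "is_cycle V (insert {u, v} H) ps" "path_edges ps \<subseteq> H"
      "cycle_edges ps = insert {u, v} (path_edges ps)"
    and "x \<in> set ps" "y \<in> set ps" "x \<noteq> y"
  shows "\<not> reachable (cyclic_edges V H) x y"
proof -
  have dist: "distinct ps" using ps(1) by (simp add: is_cycle_def)
  note not_cyclic = closing_cycle_path_edge_not_cyclic[OF assms(2,3) ps(1,3)]
  have sep: "\<not> reachable (cyclic_edges V H) (ps ! i) (ps ! j)" if ij: "i < j" "j < length ps" for i j
  proof
    let ?g = "{ps ! i, ps ! Suc i}"
    have g: "?g \<in> path_edges ps" using ij by (auto simp: path_edges_conv_nth)
    assume "reachable (cyclic_edges V H) (ps ! i) (ps ! j)"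
    moreover have "cyclic_edges V H \<subseteq> H - {?g}" using cyclic_edges_subset not_cyclic[OF g] by blast
    ultimately have r1: "reachable (H - {?g}) (ps ! i) (ps ! j)" by (rule reachable_mono)
    have "ps ! i \<notin> set (drop (Suc i) ps)"
      using dist ij by (auto simp: in_set_conv_nth nth_eq_iff_index_eq)
    then have "?g \<notin> path_edges (drop (Suc i) ps)" using path_edge_subset_set by blast
    then have "path_edges (drop (Suc i) ps) \<subseteq> H - {?g}" using path_edges_drop ps(2) by blast
    moreover have "ps ! Suc i \<in> set (drop (Suc i) ps)" "ps ! j \<in> set (drop (Suc i) ps)"
      using ij by (auto simp: in_set_conv_nth intro: exI[of _ 0] exI[of _ "j - Suc i"])
    ultimately have r2: "reachable (H - {?g}) (ps ! Suc i) (ps ! j)" by (rule reachable_along_path)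
    have "reachable (H - {?g}) (ps ! i) (ps ! Suc i)"
      using reachable_trans[OF r1 reachable_sym[OF r2]] .
    then have "?g \<in> cyclic_edges V H" using cyclic_edge_iff_reachable[OF assms(1)] g ps(2) by blast
    then show False using not_cyclic[OF g] by simp
  qed
  obtain i j where ij: "i < length ps" "ps ! i = x" "j < length ps" "ps ! j = y"
    using assms(7,8) by (auto simp: in_set_conv_nth)
  consider "i < j" | "i = j" | "j < i" by linarith
  then show ?thesis
  proof cases
    case 3
    then show ?thesis using sep[OF 3 ij(1)] ij reachable_sym[of "cyclic_edges V H" x y] by blast
  qed (use sep ij assms(9) in auto)
qed

lemma reachable_hyp_graph_edges_insert:
  assumes "\<And>x y. reachable (hyp_graph_edges T) x y \<Longrightarrow> reachable K x y"
    and "\<And>x y. x \<in> t \<Longrightarrow> y \<in> t \<Longrightarrow> reachable K x y"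
    and "reachable (hyp_graph_edges (insert t T)) x y"
  shows "reachable K x y"
proof (rule reachable_via_edges[OF _ assms(3)])
  fix p q assume pq: "{p, q} \<in> hyp_graph_edges (insert t T)"
  show "reachable K p q"
  proof (cases "{p, q} \<in> hyp_graph_edges T")
    case True
    then show ?thesis by (rule assms(1)[OF reachable_edge])
  next
    case False
    then have "{p, q} \<in> hyp_graph_edges {t}" using pq hyp_graph_edges_insert by blast
    then show ?thesis using assms(2) by (auto elim: hyp_graph_edgesE)
  qed
qed

text \<open>The vertices of the newly closed cycle are pairwise separated by the old cycles, so a
  triangle on them can join the Berge-acyclic family.\<close>

lemma closing_edge_adds_triangle:
  assumes "graph V E" and "chordal V E" and "insert {u, v} H \<subseteq> E"
    and "edge_disjoint_cycles V (insert {u, v} H)" and "{u, v} \<notin> H" and "reachable H u v"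
    and "T \<subseteq> triangles E" and "berge_acyclic V T"
    and "\<forall>x y. reachable (hyp_graph_edges T) x y \<longrightarrow> reachable (cyclic_edges V H) x y"
  obtains t where "t \<in> triangles E" "t \<notin> T" "berge_acyclic V (insert t T)"
    "\<forall>x y. reachable (hyp_graph_edges (insert t T)) x y \<longrightarrow>
       reachable (cyclic_edges V (insert {u, v} H)) x y"
proof -
  let ?H' = "insert {u, v} H"
  have H: "graph V H" using assms(1) by (rule graph_subset) (use assms(3) in blast)
  have uv: "u \<noteq> v" "u \<in> V" using graph_edge_vertices[OF assms(1)] assms(3) by auto
  obtain ps where ps: "is_cycle V ?H' ps" "path_edges ps \<subseteq> H"
    "cycle_edges ps = insert {u, v} (path_edges ps)"
    using cycle_closing_path[OF H uv(2) assms(6,5) uv(1)] .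
  have "is_cycle V E ps" using ps(1) assms(3) by (rule is_cycle_mono)
  then obtain t where t: "t \<in> triangles E" "t \<subseteq> set ps"
    using chordal_cycle_edge_in_triangle[OF assms(1,2)] ps(3) by blast
  have not_reachable: "\<not> reachable (hyp_graph_edges T) x y" if "x \<in> t" "y \<in> t" "x \<noteq> y" for x y
  proof
    assume "reachable (hyp_graph_edges T) x y"
    then have "reachable (cyclic_edges V H) x y" using assms(9) by simp
    moreover have "x \<in> set ps" "y \<in> set ps" using that(1,2) t(2) by auto
    ultimately show False using closing_cycle_vertices_separated[OF H assms(4,5) ps _ _ that(3)] by simp
  qed
  have "t \<notin> T"
  proof
    assume "t \<in> T"
    obtain a b c where "t = {a, b, c}" "a \<noteq> b" using triangleE[OF t(1)] by blast
    with \<open>t \<in> T\<close> have "reachable (hyp_graph_edges T) a b"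
      by (intro reachable_edge hyp_graph_edgesI) auto
    then show False using not_reachable \<open>t = {a, b, c}\<close> \<open>a \<noteq> b\<close> by blast
  qed
  moreover have "berge_acyclic V (insert t T)"
    using berge_acyclic_insert[OF assms(8) \<open>t \<notin> T\<close> not_reachable] .
  moreover have "reachable (cyclic_edges V ?H') x y"
    if r: "reachable (hyp_graph_edges (insert t T)) x y" for x y
  proof (rule reachable_hyp_graph_edges_insert[OF _ _ r])
    fix p q
    show "reachable (cyclic_edges V ?H') p q" if "reachable (hyp_graph_edges T) p q"
      by (rule reachable_cyclic_edges_mono[OF _ subset_insertI]) (use assms(9) that in simp)
    have path: "path_edges ps \<subseteq> cyclic_edges V ?H'"
      using ps unfolding cyclic_edges_def by (auto simp: is_cycle_def)
    show "reachable (cyclic_edges V ?H') p q" if "p \<in> t" "q \<in> t"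
      by (rule reachable_along_path[OF path]) (use that t(2) in auto)
  qed
  ultimately show ?thesis using t(1) that by blast
qed

lemma edge_disjoint_cycles_triangle_bound:
  assumes "graph V E" and "chordal V E" and "H \<subseteq> E" and "edge_disjoint_cycles V H"
  obtains T where "T \<subseteq> triangles E" "berge_acyclic V T" "cycle_rank V H \<le> int (card T)"
proof -
  have "finite H" using finite_graph_edges[OF assms(1)] assms(3) by (rule finite_subset[rotated])
  then have "\<exists>T. T \<subseteq> triangles E \<and> berge_acyclic V T \<and> cycle_rank V H \<le> int (card T) \<and>
    (\<forall>x y. reachable (hyp_graph_edges T) x y \<longrightarrow> reachable (cyclic_edges V H) x y)"
    using assms(3,4)
  proof (induction H rule: finite_induct)
    case empty
    have "berge_acyclic V {}" by (simp add: berge_acyclic_def berge_cycle_def)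
    then show ?case by (intro exI[of _ "{}"]) (simp add: cycle_rank_empty reachable_empty)
  next
    case (insert f H)
    obtain T where T: "T \<subseteq> triangles E" "berge_acyclic V T" "cycle_rank V H \<le> int (card T)"
      and inv: "\<forall>x y. reachable (hyp_graph_edges T) x y \<longrightarrow> reachable (cyclic_edges V H) x y"
      using insert.IH insert.prems edge_disjoint_cycles_subset by blast
    obtain u v where uv: "u \<in> V" "v \<in> V" "f = {u, v}"
      using graph_edgeE[OF assms(1)] insert.prems(1) by blast
    have fin: "finite V" using assms(1) by (simp add: graph_def)
    show ?case
    proof (cases "reachable H u v")
      case False
      have "cycle_rank V (insert f H) = cycle_rank V H"
        using cycle_rank_insert_unreachable[OF fin insert.hyps(1) uv(1,2) False] uv(3) by simp
      moreover have "reachable (cyclic_edges V (insert f H)) x y"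
        if "reachable (hyp_graph_edges T) x y" for x y
        by (rule reachable_cyclic_edges_mono[OF _ subset_insertI]) (use inv that in simp)
      ultimately show ?thesis using T by (intro exI[of _ T]) auto
    next
      case True
      have "insert {u, v} H \<subseteq> E" "edge_disjoint_cycles V (insert {u, v} H)" "{u, v} \<notin> H"
        using insert.prems insert.hyps(2) uv(3) by simp_all
      from closing_edge_adds_triangle[OF assms(1,2) this True T(1,2) inv]
      obtain t where t: "t \<in> triangles E" "t \<notin> T" "berge_acyclic V (insert t T)"
        "\<forall>x y. reachable (hyp_graph_edges (insert t T)) x y \<longrightarrow>
           reachable (cyclic_edges V (insert f H)) x y"
        unfolding uv(3) .
      have "cycle_rank V (insert f H) = cycle_rank V H + 1"
        using cycle_rank_insert_reachable[OF insert.hyps(1) True] insert.hyps(2) uv(3) by simp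
      moreover have "card (insert t T) = Suc (card T)"
        using t(2) finite_subset[OF T(1) finite_triangles[OF assms(1)]] by simp
      ultimately show ?thesis using T t by (intro exI[of _ "insert t T"]) auto
    qed
  qed
  then show ?thesis using that by blast
qed

lemma spanning_cactus_card_bound:
  assumes "graph V E" and "chordal V E" and "spanning_cactus_subgraph V E C"
  obtains T where "T \<subseteq> triangles E" "berge_acyclic V T" "int (card C) \<le> int (card V) - 1 + int (card T)"
proof -
  have C: "C \<subseteq> E" "connected_graph V C" "edge_disjoint_cycles V C"
    using assms(3) by (auto simp: spanning_cactus_subgraph_def cactus_iff)
  obtain T where "T \<subseteq> triangles E" "berge_acyclic V T" "cycle_rank V C \<le> int (card T)"
    using edge_disjoint_cycles_triangle_bound[OF assms(1,2) C(1,3)] .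
  moreover have "int (card C) = int (card V) - 1 + cycle_rank V C"
    using card_edges_connected[OF _ C(2)] assms(1) by (simp add: graph_def)
  ultimately show ?thesis using that by simp
qed

locale tight_triangle_extension =
  fixes V :: "'a set" and E T X :: "'a set set"
  assumes graph: "graph V E"
    and triangles: "T \<subseteq> triangles E"
    and acyclic: "berge_acyclic V T"
    and subset: "X \<subseteq> E"
    and hyp_subset: "hyp_graph_edges T \<subseteq> X"
    and rank: "cycle_rank V X = int (card T)"
begin

lemma graph_X: "graph V X"
  using graph subset by (rule graph_subset)

lemma cyclic_edges_subset_hyp: "cyclic_edges V X \<subseteq> hyp_graph_edges T"
proof
  fix f assume f: "f \<in> cyclic_edges V X"
  then have "f \<in> X" using cyclic_edges_subset by blast
  then obtain p q where pq: "f = {p, q}" using graph_X by (elim graph_edgeE) auto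
  show "f \<in> hyp_graph_edges T"
  proof (rule ccontr)
    assume not_hyp: "f \<notin> hyp_graph_edges T"
    \<comment> \<open>Deleting an edge on a cycle lowers the cycle rank, but X - {f} still contains G[T].\<close>
    have r: "reachable (X - {{p, q}}) p q"
      using f pq cyclic_edge_iff_reachable[OF graph_X] \<open>f \<in> X\<close> by simp
    have fin: "finite (X - {{p, q}})" using finite_graph_edges[OF graph_X] by simp
    have "insert {p, q} (X - {{p, q}}) = X" using \<open>f \<in> X\<close> pq by blast
    then have "cycle_rank V X = cycle_rank V (X - {{p, q}}) + 1"
      using cycle_rank_insert_reachable[OF fin r] by simp
    moreover have "cycle_rank V (hyp_graph_edges T) \<le> cycle_rank V (X - {{p, q}})"
      using hyp_subset not_hyp pq graph_subset[OF graph_X]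
      by (intro cycle_rank_mono) auto
    ultimately show False
      using rank cycle_rank_hyp_graph_edges[OF graph triangles acyclic] by simp
  qed
qed

lemma triangle_separated:
  assumes "t \<in> T" and "t = {a, b, c}" "a \<noteq> b" "b \<noteq> c" "a \<noteq> c"
  shows "\<not> reachable (X - hyp_graph_edges {t}) a b"
proof
  let ?W = "X - hyp_graph_edges {t}"
  assume r: "reachable ?W a b"
  \<comment> \<open>Then restoring the three edges of t adds two independent cycles to ?W, whose cycle rank is
    already at least that of G[T - {t}].\<close>
  have t_edges: "hyp_graph_edges {t} = {{a, b}, {b, c}, {a, c}}"
    using hyp_graph_edges_triangle[OF assms(3-5)] assms(2) by simp
  have fin: "finite V" "finite ?W" using graph finite_graph_edges[OF graph_X] by (auto simp: graph_def)
  have "finite T" using finite_subset[OF triangles finite_triangles[OF graph]] .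
  moreover from this have "card T > 0" using assms(1) by (auto simp: card_gt_0_iff)
  ultimately have card_T: "int (card (T - {t})) = int (card T) - 1"
    using assms(1) by (simp add: card_Diff_singleton of_nat_diff)
  have "hyp_graph_edges (T - {t}) \<subseteq> ?W"
    using hyp_subset hyp_graph_edges_mono[of "T - {t}" T]
      berge_acyclic_hyp_graph_edges_disjoint[OF acyclic assms(1)] by blast
  then have "cycle_rank V (hyp_graph_edges (T - {t})) \<le> cycle_rank V ?W"
    using graph_subset[OF graph_X] by (intro cycle_rank_mono) auto
  moreover have "cycle_rank V (hyp_graph_edges (T - {t})) = int (card (T - {t}))"
    by (rule cycle_rank_hyp_graph_edges[OF graph _ berge_acyclic_mono[OF acyclic]])
      (use triangles in auto)
  ultimately have W: "int (card T) - 1 \<le> cycle_rank V ?W" using card_T by simp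
  have V: "a \<in> V" "b \<in> V" "c \<in> V"
    using triangle_subset_vertices[OF graph] triangles assms(1,2) by blast+
  let ?W1 = "insert {a, b} ?W"
  let ?W2 = "insert {b, c} ?W1"
  have "cycle_rank V ?W1 = cycle_rank V ?W + 1"
    using cycle_rank_insert_reachable[OF fin(2) r] t_edges by simp
  moreover have "cycle_rank V ?W1 \<le> cycle_rank V ?W2"
    using cycle_rank_insert_ge[OF fin(1) _ V(2,3)] fin(2) by simp
  moreover have "cycle_rank V (insert {a, c} ?W2) = cycle_rank V ?W2 + 1"
  proof (rule cycle_rank_insert_reachable)
    show "finite ?W2" using fin(2) by simp
    show "reachable ?W2 a c"
      using reachable_trans[OF reachable_edge[of a b] reachable_edge[of b c]] by simp
    show "{a, c} \<notin> ?W2" using t_edges assms(3-5) by (auto simp: doubleton_eq_iff)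
  qed
  moreover have "insert {a, c} ?W2 = X"
    using hyp_subset hyp_graph_edges_mono[of "{t}" T] assms(1) t_edges by blast
  ultimately show False using W rank by simp
qed

lemma cycle_is_triangle:
  assumes "is_cycle V X zs"
  obtains t where "t \<in> T" "cycle_edges zs = hyp_graph_edges {t}"
proof -
  let ?K = "cycle_edges zs"
  have "zs \<noteq> []" using assms by (auto simp: is_cycle_def)
  then obtain e where e: "e \<in> ?K" using cycle_edges_conv_path_edges by blast
  have KX: "?K \<subseteq> X" using assms by (simp add: is_cycle_def)
  with e assms have "e \<in> cyclic_edges V X" unfolding cyclic_edges_def by blast
  then have "e \<in> hyp_graph_edges T" using cyclic_edges_subset_hyp by blast
  then obtain a b t where ab: "e = {a, b}" "a \<noteq> b" "t \<in> T" "a \<in> t" "b \<in> t"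
    unfolding mem_hyp_graph_edges by blast
  moreover have "t \<in> triangles E" using ab(3) triangles by blast
  ultimately obtain c where c: "t = {a, b, c}" "c \<noteq> a" "c \<noteq> b"
    using triangle_through_edge by metis
  let ?W = "X - hyp_graph_edges {t}"
  have t_edges: "hyp_graph_edges {t} = {{a, b}, {b, c}, {a, c}}"
    using hyp_graph_edges_triangle[of a b c] ab(2) c by simp
  have sep_ab: "\<not> reachable ?W a b" using triangle_separated[OF ab(3) c(1)] ab(2) c by simp
  have sep_bc: "\<not> reachable ?W b c"
    using triangle_separated[OF ab(3), of b c a] ab(2) c by (simp add: insert_commute)
  have sep_ac: "\<not> reachable ?W a c"
    using triangle_separated[OF ab(3), of a c b] ab(2) c by (simp add: insert_commute)
  have around: "reachable (?K - {{a, b}}) a b"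
    using reachable_around_cycle_edge[OF assms] e ab(1) by simp
  have K_split: "?K - {{a, b}} \<subseteq> insert {b, c} (insert {a, c} ?W)" using KX t_edges by blast
  have ac: "{a, c} \<in> ?K"
  proof (rule ccontr)
    assume "{a, c} \<notin> ?K"
    with K_split have "?K - {{a, b}} \<subseteq> insert {b, c} ?W" by blast
    with around have "reachable (insert {b, c} ?W) a b" by (rule reachable_mono)
    then show False using sep_ab sep_ac unfolding reachable_insert by blast
  qed
  have bc: "{b, c} \<in> ?K"
  proof (rule ccontr)
    assume "{b, c} \<notin> ?K"
    with K_split have "?K - {{a, b}} \<subseteq> insert {a, c} ?W" by blast
    with around have "reachable (insert {a, c} ?W) a b" by (rule reachable_mono)
    then show False using sep_ab sep_bc reachable_sym[of ?W c b] unfolding reachable_insert by blast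
  qed
  have "?K = hyp_graph_edges {t}"
    using cycle_through_triangle[OF assms ab(2) _ _ _ bc ac] c(2,3) e ab(1) t_edges by auto
  with ab(3) show ?thesis by (rule that)
qed

lemma edge_disjoint_cycles: "edge_disjoint_cycles V X"
  unfolding edge_disjoint_cycles_def
proof (intro ballI allI impI, elim conjE)
  fix f xs ys
  assume xs: "is_cycle V X xs" "f \<in> cycle_edges xs" and ys: "is_cycle V X ys" "f \<in> cycle_edges ys"
  obtain t1 t2 where t: "t1 \<in> T" "t2 \<in> T"
    "cycle_edges xs = hyp_graph_edges {t1}" "cycle_edges ys = hyp_graph_edges {t2}"
    using cycle_is_triangle[OF xs(1)] cycle_is_triangle[OF ys(1)] by metis
  obtain u v where "f = {u, v}" using is_cycle_edgeE[OF xs] by metis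
  then have "u \<noteq> v" "u \<in> t1" "v \<in> t1" "u \<in> t2" "v \<in> t2"
    using xs(2) ys(2) t(3,4) by (auto elim: hyp_graph_edgesE)
  then have "t1 = t2" using berge_acyclic_eq_if_two_common[OF acyclic t(1,2)] by blast
  with t(3,4) show "cycle_edges xs = cycle_edges ys" by simp
qed

lemma max_spanning_cactus:
  assumes "chordal V E" and "connected_graph V X"
    and max: "\<forall>W \<F>. subhypergraph W \<F> V (triangles E) \<and> berge_acyclic W \<F> \<longrightarrow> card \<F> \<le> card T"
  shows "max_spanning_cactus V E X"
proof -
  have fin: "finite V" using graph by (simp add: graph_def)
  have "spanning_cactus_subgraph V E X"
    using subset assms(2) edge_disjoint_cycles by (simp add: spanning_cactus_subgraph_def cactus_iff)
  moreover have "card C \<le> card X" if C: "spanning_cactus_subgraph V E C" for C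
  proof -
    obtain T' where T': "T' \<subseteq> triangles E" "berge_acyclic V T'"
      "int (card C) \<le> int (card V) - 1 + int (card T')"
      using spanning_cactus_card_bound[OF graph assms(1) C] .
    have "e \<noteq> {} \<and> e \<subseteq> V" if "e \<in> T'" for e
    proof -
      have e: "e \<in> triangles E" using T'(1) that by blast
      then show ?thesis using triangle_subset_vertices[OF graph e] by (auto simp: triangles_def)
    qed
    then have "hypergraph V T'" using fin by (simp add: hypergraph_def)
    then have "subhypergraph V T' V (triangles E)" using T'(1) by (simp add: subhypergraph_def)
    then have "card T' \<le> card T" using max T'(2) by blast
    moreover have "int (card X) = int (card V) - 1 + int (card T)"
      using card_edges_connected[OF fin assms(2)] rank by simp
    ultimately show ?thesis using T'(3) by linarith
  qed
  ultimately show ?thesis by (simp add: max_spanning_cactus_def)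
qed

end

theorem mainTheorem10:
  fixes V :: "'a set" and E :: "'a set set" and V' :: "'a set" and \<E>' :: "'a set set"
  assumes "graph V E"
    and "connected_graph V E"
    and "chordal V E"
    and "subhypergraph V' \<E>' V (triangles E)"
    and "berge_acyclic V' \<E>'"
    and "\<forall>W \<F>. subhypergraph W \<F> V (triangles E) \<and> berge_acyclic W \<F> \<longrightarrow> card \<F> \<le> card \<E>'"
  defines "E' \<equiv> hyp_graph_edges \<E>' \<union> non_triangle_edges E"
  shows "(\<exists>X. (join_step V E)\<^sup>*\<^sup>* E' X \<and> connected_graph V X) \<and>
         (\<forall>X. (join_step V E)\<^sup>*\<^sup>* E' X \<and> connected_graph V X \<longrightarrow> max_spanning_cactus V E X)"
proof -
  have T: "\<E>' \<subseteq> triangles E" "berge_acyclic V \<E>'"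
    using assms(4) berge_acyclic_mono[OF assms(5)] by (auto simp: subhypergraph_def)
  have E'_sub: "E' \<subseteq> E"
    unfolding E'_def using hyp_graph_edges_subset[OF T(1)] by (auto simp: non_triangle_edges_def)
  have E'_rank: "cycle_rank V E' = int (card \<E>')"
    unfolding E'_def
    using cycle_rank_union_non_triangle_edges[OF assms(1,3) hyp_graph_edges_subset[OF T(1)] order_refl]
      cycle_rank_hyp_graph_edges[OF assms(1) T] by simp
  have "max_spanning_cactus V E X"
    if X: "(join_step V E)\<^sup>*\<^sup>* E' X" "connected_graph V X" for X
  proof -
    note inv = join_steps_invariants[OF assms(1) X(1) E'_sub]
    have "tight_triangle_extension V E \<E>' X"
      using assms(1) T inv E'_rank unfolding E'_def by unfold_locales auto
    then show ?thesis using tight_triangle_extension.max_spanning_cactus assms(3,6) X(2) by blast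
  qed
  then show ?thesis using join_steps_connect[OF assms(1,2) E'_sub] by blast
qed

end
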